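(* Let $p$ be a prime. For integers $n\ge1$, $\mu\ge1$, let $P(n,p^\mu)$ be the probability that a random symmetric $n\times n$ matrix over $\mathbf{Z}_{p^\mu}$ has determinant $\not\equiv 0\pmod{p^\mu}$, and extend this by the conventions $P(0,p^\mu)=1$ for $\mu>0$ and $P(n,p^\mu)=0$ for $\mu\le0$ (all $n\ge0$). Then for all $n\ge 0$ and $\mu\ge 0$, $$P(n+1,p^\mu)\le P(n,p^\mu)\le P(n,p^{\mu+1}).$$
   Context: For a positive integer $m$, $\mathbf{Z}_m=\{1,2,\ldots,m\}$ (viewed as residues mod $m$). A random symmetric $n\times n$ matrix over $\mathbf{Z}_m$ is one whose entries $a_{ij}$, $i\le j$, are chosen independently and uniformly from $\mathbf{Z}_m$, with $a_{ji}=a_{ij}$. *)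

theory Defs
  imports "Jordan_Normal_Form.Determinant"
begin

text \<open>Symmetric n x n integer matrices whose entries are representatives in
  Z_m = {1,...,m} (viewed as residues mod m).\<close>
definition sym_mats :: "nat \<Rightarrow> nat \<Rightarrow> int mat set" where
  "sym_mats n m = {A \<in> carrier_mat n n.
      (\<forall>i<n. \<forall>j<n. A $$ (i,j) \<in> {1..int m} \<and> A $$ (i,j) = A $$ (j,i))}"

definition nonsing_sym_mats :: "nat \<Rightarrow> nat \<Rightarrow> int mat set" where
  "nonsing_sym_mats n m = {A \<in> sym_mats n m. \<not> (int m dvd det A)}"

text \<open>P(n, p^mu): a random symmetric matrix has its n(n+1)/2 entries a_ij (i \<le> j)
  independent uniform in Z_m, so each symmetric matrix has probability
  1 / m^(n(n+1)/2).\<close>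
definition Pdet :: "nat \<Rightarrow> nat \<Rightarrow> nat \<Rightarrow> real" where
  "Pdet n p \<mu> =
     (if \<mu> = 0 then 0
      else if n = 0 then 1
      else real (card (nonsing_sym_mats n (p ^ \<mu>))) / real (p ^ \<mu>) ^ (n * (n + 1) div 2))"

end

theory Submission
  imports Defs "HOL-Number_Theory.Cong"
begin

text \<open>Let \<open>h(k, n)\<close> be the probability that a random symmetric matrix \<open>[[A, p B], [p B\<^sup>T, p C]]\<close>
  over \<open>Z/p\<^sup>\<mu>\<close>, with \<open>A\<close> of size \<open>n\<close> and \<open>C\<close> of size \<open>k\<close>, is invertible. Its first row either
  has a unit in the corner (probability \<open>1 - 1/p\<close>), or a unit elsewhere in the first \<open>n + 1\<close>
  entries (probability \<open>1/p - 1/p\<^sup>n\<^sup>+\<^sup>1\<close>), or is divisible by \<open>p\<close>. In the first two cases a Schur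
  complement modulo \<open>p\<^sup>\<mu>\<close> removes one, respectively two, rows and columns without changing the
  distribution of the rest; in the third the row joins the border. Hence
  \<open>h(k, n + 1) = (1 - 1/p) h(k, n) + (1/p - 1/p\<^sup>n\<^sup>+\<^sup>1) h(k, n - 1) + h(k + 1, n) / p\<^sup>n\<^sup>+\<^sup>1\<close>.
  As \<open>h(0, n) = P(n, p\<^sup>\<mu>)\<close> and \<open>h(j, 0) = P(j, p\<^sup>\<mu>\<^sup>-\<^sup>j)\<close>, the probability \<open>P(n, p\<^sup>\<mu>)\<close> is a
  combination of the boundary values \<open>P(j, p\<^sup>\<mu>\<^sup>-\<^sup>j)\<close> that is monotone in them and decreases in \<open>n\<close>
  when they decrease in \<open>j\<close>. Both inequalities then follow together by induction on \<open>\<mu>\<close>.\<close>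

section \<open>A linear recursion and its monotonicity\<close>

fun recsol :: "real \<Rightarrow> nat \<Rightarrow> (nat \<Rightarrow> real) \<Rightarrow> real" where
  "recsol p 0 x = x 0"
| "recsol p (Suc n) x = (1 - 1/p) * recsol p n x + (1/p - 1/p^Suc n) * recsol p (n - 1) x
      + 1/p^Suc n * recsol p n (\<lambda>j. x (Suc j))"

declare recsol.simps(2)[simp del]

lemma recsol_linear: "recsol p n (\<lambda>j. a * x j + b * y j) = a * recsol p n x + b * recsol p n y"
proof (induction p n x arbitrary: y rule: recsol.induct)
  case (1 p x)
  then show ?case by simp
next
  case (2 p n x)
  show ?case
    by (simp only: recsol.simps "2.IH") (simp add: algebra_simps)
qed

lemma recsol_mono:
  assumes p: "p \<ge> 1" and le: "\<And>j. x j \<le> y j"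
  shows "recsol p n x \<le> recsol p n y"
  using le
proof (induction n arbitrary: x y rule: less_induct)
  case (less n)
  show ?case
  proof (cases n)
    case 0
    then show ?thesis using less.prems by simp
  next
    case (Suc m)
    have "p \<le> p ^ Suc m" using p by (simp add: power_increasing[of 1 "Suc m" p, simplified])
    then have coeffs: "0 \<le> 1 - 1/p" "0 \<le> 1/p - 1/p^Suc m" "0 \<le> 1/p^Suc m"
      using p by (simp_all add: frac_le)
    have "recsol p m x \<le> recsol p m y" "recsol p (m - 1) x \<le> recsol p (m - 1) y"
      "recsol p m (\<lambda>j. x (Suc j)) \<le> recsol p m (\<lambda>j. y (Suc j))"
      using Suc less.prems by (auto intro: less.IH)
    with coeffs show ?thesis
      unfolding Suc recsol.simps by (intro add_mono mult_left_mono)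
  qed
qed

text \<open>\<open>recsol_step\<close> absorbs one step of the recursion into the boundary sequence. It preserves
  decreasing sequences, which gives \<open>recsol p (Suc n) x \<le> recsol p n x\<close> by induction on \<open>n\<close>.\<close>

definition recsol_step :: "real \<Rightarrow> (nat \<Rightarrow> real) \<Rightarrow> nat \<Rightarrow> real" where
  "recsol_step p x r =
     (1 - 1/p^r) * x (r - 1) + (1/p^r - 1/p^Suc r) * x r + 1/p^Suc r * x (Suc r)"

lemma recsol_step_shift:
  assumes "p > 0"
  shows "recsol_step p (\<lambda>j. x (Suc j)) = (\<lambda>r. p * recsol_step p x (Suc r) + (1 - p) * x r)"
proof
  fix r
  show "recsol_step p (\<lambda>j. x (Suc j)) r = p * recsol_step p x (Suc r) + (1 - p) * x r"
    using assms by (cases r) (auto simp: recsol_step_def field_simps)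
qed

lemma recsol_Suc_eq_recsol_step:
  assumes p: "p > 0"
  shows "recsol p (Suc n) x = recsol p n (recsol_step p x)"
proof (induction n arbitrary: x rule: less_induct)
  case (less n)
  show ?case
  proof (cases n)
    case 0
    then show ?thesis using p by (simp add: recsol_step_def field_simps recsol.simps)
  next
    case (Suc m)
    have IH1: "recsol p (Suc m) x = recsol p m (recsol_step p x)"
      and IH2: "recsol p (Suc m) (\<lambda>j. x (Suc j)) = recsol p m (recsol_step p (\<lambda>j. x (Suc j)))"
      using Suc by (auto intro: less.IH)
    have shift: "recsol p m (recsol_step p (\<lambda>j. x (Suc j)))
        = p * recsol p m (\<lambda>j. recsol_step p x (Suc j)) + (1 - p) * recsol p m x"
      unfolding recsol_step_shift[OF p] by (rule recsol_linear)
    show ?thesis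
    proof (cases m)
      case 0
      then have "n = Suc 0" using Suc by simp
      then show ?thesis using p
        by (simp add: recsol.simps recsol_step_def numeral_2_eq_2 field_simps power2_eq_square)
    next
      case (Suc k)
      have IH3: "recsol p m x = recsol p k (recsol_step p x)"
        unfolding Suc by (rule less.IH) (simp add: \<open>n = Suc m\<close> Suc)
      have "recsol p (Suc n) x = (1 - 1/p) * recsol p m (recsol_step p x)
          + (1/p - 1/(p * p^Suc m)) * recsol p m x
          + 1/(p * p^Suc m) * (p * recsol p m (\<lambda>j. recsol_step p x (Suc j)) + (1 - p) * recsol p m x)"
        unfolding \<open>n = Suc m\<close> recsol.simps(2)[of p "Suc m"] IH1 IH2 shift by simp
      also have "\<dots> = (1 - 1/p) * recsol p m (recsol_step p x) + (1/p - 1/p^Suc m) * recsol p m x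
          + 1/p^Suc m * recsol p m (\<lambda>j. recsol_step p x (Suc j))"
        using p by (simp add: field_simps)
      also have "\<dots> = recsol p n (recsol_step p x)"
        unfolding \<open>n = Suc m\<close> recsol.simps(2)[of p m] IH3 using Suc by simp
      finally show ?thesis .
    qed
  qed
qed

lemma recsol_step_antimono:
  assumes p: "p \<ge> 1" and x: "\<And>j. x (Suc j) \<le> x j"
  shows "recsol_step p x (Suc r) \<le> recsol_step p x r"
proof -
  define u where "u = 1/p^r"
  define w where "w = 1/p"
  have uw: "0 \<le> u" "u \<le> 1" "0 \<le> w" "w \<le> 1" using p unfolding u_def w_def by auto
  then have "u * w \<le> u" by (simp add: mult_left_le)
  have "x r \<le> x (r - 1)" using x by (cases r) auto
  have "u * w * w * x (Suc (Suc r)) \<le> u * w * w * x (Suc r)"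
    using uw x by (intro mult_left_mono) auto
  moreover have "(1 - u) * x r \<le> (1 - u) * x (r - 1)"
    using uw \<open>x r \<le> x (r - 1)\<close> by (intro mult_left_mono) auto
  ultimately have "(1 - u * w) * x r + (u * w - u * w * w) * x (Suc r) + u * w * w * x (Suc (Suc r))
      \<le> (1 - u) * x (r - 1) + (u - u * w) * x r + u * w * x (Suc r)"
    by (simp add: algebra_simps)
  moreover have "1/p^Suc r = u * w" "1/p^Suc (Suc r) = u * w * w"
    unfolding u_def w_def by simp_all
  ultimately show ?thesis unfolding recsol_step_def u_def by simp
qed

lemma recsol_Suc_le:
  assumes p: "p \<ge> 1" and x: "\<And>j. x (Suc j) \<le> x j"
  shows "recsol p (Suc n) x \<le> recsol p n x"
  using x
proof (induction n arbitrary: x)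
  case 0
  have "(1 - 1/p) * x 0 + 1/p * x 1 \<le> (1 - 1/p) * x 0 + 1/p * x 0"
    using 0 p by (intro add_left_mono mult_left_mono) auto
  then show ?case using p by (simp add: recsol.simps(2) algebra_simps)
next
  case (Suc n)
  have "recsol p (Suc (Suc n)) x = recsol p (Suc n) (recsol_step p x)"
    using p by (intro recsol_Suc_eq_recsol_step) auto
  also have "\<dots> \<le> recsol p n (recsol_step p x)"
    by (intro Suc.IH recsol_step_antimono[OF p] Suc.prems)
  also have "\<dots> = recsol p (Suc n) x"
    using p by (intro recsol_Suc_eq_recsol_step[symmetric]) auto
  finally show ?case .
qed

section \<open>Determinants modulo an integer\<close>

lemma det_mod_cong:
  fixes X Y :: "int mat"
  assumes X: "X \<in> carrier_mat n n" and Y: "Y \<in> carrier_mat n n"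
    and XY: "\<And>i j. i < n \<Longrightarrow> j < n \<Longrightarrow> X $$ (i,j) mod q = Y $$ (i,j) mod q"
  shows "det X mod q = det Y mod q"
proof -
  have prod: "(\<Prod>i = 0..<n. X $$ (i, \<sigma> i)) mod q = (\<Prod>i = 0..<n. Y $$ (i, \<sigma> i)) mod q"
    if "\<sigma> permutes {0..<n}" for \<sigma>
  proof -
    have "(\<Prod>i = 0..<n. X $$ (i, \<sigma> i)) mod q = (\<Prod>i = 0..<n. X $$ (i, \<sigma> i) mod q) mod q"
      by (simp add: mod_prod_eq)
    also have "\<dots> = (\<Prod>i = 0..<n. Y $$ (i, \<sigma> i) mod q) mod q"
      by (rule arg_cong[where f="\<lambda>x. x mod q"], rule prod.cong)
        (use XY permutes_in_image[OF that] in auto)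
    also have "\<dots> = (\<Prod>i = 0..<n. Y $$ (i, \<sigma> i)) mod q"
      by (simp add: mod_prod_eq)
    finally show ?thesis .
  qed
  have "det X mod q
      = (\<Sum>\<sigma>\<in>{\<sigma>. \<sigma> permutes {0..<n}}. (signof \<sigma> * (\<Prod>i = 0..<n. X $$ (i, \<sigma> i))) mod q) mod q"
    unfolding det_def'[OF X] by (simp add: mod_sum_eq)
  also have "\<dots>
      = (\<Sum>\<sigma>\<in>{\<sigma>. \<sigma> permutes {0..<n}}. (signof \<sigma> * (\<Prod>i = 0..<n. Y $$ (i, \<sigma> i))) mod q) mod q"
    by (rule arg_cong[where f="\<lambda>x. x mod q"], rule sum.cong) (use prod in \<open>auto intro: mod_mult_cong\<close>)
  also have "\<dots> = det Y mod q"
    unfolding det_def'[OF Y] by (simp add: mod_sum_eq)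
  finally show ?thesis .
qed

lemma mult_mat_mod_cong_left:
  fixes X Y Z :: "int mat"
  assumes X: "X \<in> carrier_mat n m" and Y: "Y \<in> carrier_mat n m" and Z: "Z \<in> carrier_mat m k"
    and XY: "\<And>i j. i < n \<Longrightarrow> j < m \<Longrightarrow> X $$ (i,j) mod q = Y $$ (i,j) mod q"
    and ij: "i < n" "j < k"
  shows "(X * Z) $$ (i,j) mod q = (Y * Z) $$ (i,j) mod q"
proof -
  have "(X * Z) $$ (i,j) mod q = (\<Sum>l = 0..<m. (X $$ (i,l) * Z $$ (l,j)) mod q) mod q"
    using X Z ij by (simp add: scalar_prod_def mod_sum_eq)
  also have "\<dots> = (\<Sum>l = 0..<m. (Y $$ (i,l) * Z $$ (l,j)) mod q) mod q"
    by (rule arg_cong[where f="\<lambda>x. x mod q"], rule sum.cong) (use XY ij in \<open>auto intro: mod_mult_cong\<close>)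
  also have "\<dots> = (Y * Z) $$ (i,j) mod q"
    using Y Z ij by (simp add: scalar_prod_def mod_sum_eq)
  finally show ?thesis .
qed

lemma four_block_mat_mult_elim:
  fixes B C D A Bi :: "'a :: comm_ring_1 mat"
  assumes B: "B \<in> carrier_mat m m" and C: "C \<in> carrier_mat m N" and D: "D \<in> carrier_mat N m"
    and A: "A \<in> carrier_mat N N" and Bi: "Bi \<in> carrier_mat m m"
  shows "four_block_mat B C D A * four_block_mat (1\<^sub>m m) (- (Bi * C)) (0\<^sub>m N m) (1\<^sub>m N)
    = four_block_mat B (C - B * Bi * C) D (A - D * Bi * C)"
proof -
  have BiC: "Bi * C \<in> carrier_mat m N" using Bi C by simp
  have neg: "X * (- (Bi * C)) = - (X * (Bi * C))" "X * Bi * C = X * (Bi * C)"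
    and XBiC: "X * (Bi * C) \<in> carrier_mat n N" if "X \<in> carrier_mat n m" for X n
    using that Bi C by (auto intro: uminus_mult_right_mat)
  have "B * (- (Bi * C)) + C * 1\<^sub>m N = C - B * Bi * C"
    using neg[OF B] carrier_matD[OF XBiC[OF B]] C by (intro eq_matI) (auto simp del: index_mult_mat)
  moreover have "D * (- (Bi * C)) + A * 1\<^sub>m N = A - D * Bi * C"
    using neg[OF D] carrier_matD[OF XBiC[OF D]] A by (intro eq_matI) (auto simp del: index_mult_mat)
  moreover have "B * 1\<^sub>m m + C * 0\<^sub>m N m = B" "D * 1\<^sub>m m + A * 0\<^sub>m N m = D"
    using B C D A by auto
  ultimately show ?thesis
    using mult_four_block_mat[OF B C D A one_carrier_mat uminus_carrier_mat[OF BiC]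
        zero_carrier_mat one_carrier_mat] by simp
qed

lemma det_four_block_mat_mod:
  fixes B C D A Bi :: "int mat"
  assumes B: "B \<in> carrier_mat m m" and C: "C \<in> carrier_mat m N" and D: "D \<in> carrier_mat N m"
    and A: "A \<in> carrier_mat N N" and Bi: "Bi \<in> carrier_mat m m"
    and inv: "\<And>i j. i < m \<Longrightarrow> j < m \<Longrightarrow> (B * Bi) $$ (i,j) mod q = 1\<^sub>m m $$ (i,j) mod q"
  shows "det (four_block_mat B C D A) mod q = (det B * det (A - D * Bi * C)) mod q"
proof -
  let ?E = "four_block_mat (1\<^sub>m m) (- (Bi * C)) (0\<^sub>m N m) (1\<^sub>m N)"
  let ?S = "A - D * Bi * C"
  have S: "?S \<in> carrier_mat N N" using A D Bi C by auto
  have "det ?E = 1"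
    using det_four_block_mat_lower_left_zero[of "1\<^sub>m m" m "- (Bi * C)" N "0\<^sub>m N m" "1\<^sub>m N"] Bi C
    by simp
  then have "det (four_block_mat B C D A) = det (four_block_mat B (C - B * Bi * C) D ?S)"
    using det_mult[of "four_block_mat B C D A" "m+N" ?E] four_block_mat_mult_elim[OF B C D A Bi] B A
    by simp
  moreover have "(C - B * Bi * C) $$ (i,j) mod q = 0" if "i < m" "j < N" for i j
  proof -
    have "(B * Bi * C) $$ (i,j) mod q = (1\<^sub>m m * C) $$ (i,j) mod q"
      using B Bi C inv that by (intro mult_mat_mod_cong_left[of _ m m _ _ N]) auto
    then show ?thesis using B Bi C that by (simp add: mod_diff_cong)
  qed
  then have "det (four_block_mat B (C - B * Bi * C) D ?S) mod q = det (four_block_mat B (0\<^sub>m m N) D ?S) mod q"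
    using B C D S
    by (intro det_mod_cong[of _ "m+N"]) (auto simp: index_mat_four_block carrier_matD)
  moreover have "det (four_block_mat B (0\<^sub>m m N) D ?S) = det B * det ?S"
    using B D S by (intro det_four_block_mat_upper_right_zero) auto
  ultimately show ?thesis by simp
qed

lemma adj_mat_sym:
  fixes B :: "'a :: comm_ring_1 mat"
  assumes B: "B \<in> carrier_mat m m" and sym: "\<And>i j. i < m \<Longrightarrow> j < m \<Longrightarrow> B $$ (i,j) = B $$ (j,i)"
    and ij: "i < m" "j < m"
  shows "adj_mat B $$ (i,j) = adj_mat B $$ (j,i)"
proof -
  have "mat_delete B j i = transpose_mat (mat_delete B i j)"
    using B sym unfolding mat_delete_def by (intro eq_matI) auto
  then have "det (mat_delete B j i) = det (mat_delete B i j)"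
    using det_transpose[OF mat_delete_carrier[OF B]] by simp
  then show ?thesis using B ij unfolding adj_mat_def cofactor_def by (simp add: add.commute)
qed

lemma sym_mat_inverse_mod:
  fixes B :: "int mat"
  assumes B: "B \<in> carrier_mat m m" and sym: "\<And>i j. i < m \<Longrightarrow> j < m \<Longrightarrow> B $$ (i,j) = B $$ (j,i)"
    and cop: "coprime (det B) q"
  obtains Bi where "Bi \<in> carrier_mat m m" "\<And>i j. i < m \<Longrightarrow> j < m \<Longrightarrow> Bi $$ (i,j) = Bi $$ (j,i)"
    "\<And>i j. i < m \<Longrightarrow> j < m \<Longrightarrow> (B * Bi) $$ (i,j) mod q = 1\<^sub>m m $$ (i,j) mod q"
proof -
  obtain u where u: "[det B * u = 1] (mod q)" using cong_solve_coprime_int[OF cop] by blast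
  define Bi where "Bi = u \<cdot>\<^sub>m adj_mat B"
  have "B * Bi = u \<cdot>\<^sub>m (det B \<cdot>\<^sub>m 1\<^sub>m m)" unfolding Bi_def
    using mult_smult_distrib[OF B adj_mat(1)[OF B]] adj_mat(2)[OF B] by simp
  then have "(B * Bi) $$ (i,j) mod q = 1\<^sub>m m $$ (i,j) mod q" if "i < m" "j < m" for i j
    using that u unfolding cong_def by (auto simp: mult.commute)
  moreover have "Bi $$ (i,j) = Bi $$ (j,i)" if "i < m" "j < m" for i j
    unfolding Bi_def using adj_mat_sym[OF B sym that] adj_mat(1)[OF B] that by simp
  moreover have "Bi \<in> carrier_mat m m" unfolding Bi_def using adj_mat(1)[OF B] by simp
  ultimately show thesis using that by blast
qed

lemma det_mat_2:
  "det (mat 2 2 f) = f (0,0) * f (1,1) - f (0,1) * f (1,0)"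
proof -
  have "det (mat 2 2 f) = (\<Sum>j<2. mat 2 2 f $$ (0,j) * cofactor (mat 2 2 f) 0 j)"
    by (rule laplace_expansion_row) simp_all
  also have "\<dots> = f (0,0) * cofactor (mat 2 2 f) 0 0 + f (0,1) * cofactor (mat 2 2 f) 0 1"
    by (simp add: numeral_2_eq_2)
  also have "cofactor (mat 2 2 f) 0 0 = f (1,1)"
    unfolding cofactor_def by (subst det_single) (auto simp: mat_delete_def)
  also have "cofactor (mat 2 2 f) 0 1 = - f (1,0)"
    unfolding cofactor_def by (subst det_single) (auto simp: mat_delete_def)
  finally show ?thesis by simp
qed

definition permute_mat :: "(nat \<Rightarrow> nat) \<Rightarrow> nat \<Rightarrow> 'a mat \<Rightarrow> 'a mat" where
  "permute_mat \<sigma> N M = mat N N (\<lambda>(i,j). M $$ (\<sigma> i, \<sigma> j))"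

lemma det_permute_mat:
  fixes A :: "'a :: comm_ring_1 mat"
  assumes A: "A \<in> carrier_mat N N" and \<sigma>: "\<sigma> permutes {0..<N}"
  shows "det (permute_mat \<sigma> N A) = det A"
proof -
  define B where "B = mat N N (\<lambda>(i,j). A $$ (\<sigma> i, j))"
  have B: "B \<in> carrier_mat N N" unfolding B_def by simp
  have "permute_mat \<sigma> N A = transpose_mat (mat N N (\<lambda>(i,j). transpose_mat B $$ (\<sigma> i, j)))"
    using \<sigma> unfolding B_def permute_mat_def by (intro eq_matI) (auto simp: permutes_in_image)
  then have "det (permute_mat \<sigma> N A) = det (mat N N (\<lambda>(i,j). transpose_mat B $$ (\<sigma> i, j)))"
    using det_transpose[of "mat N N (\<lambda>(i,j). transpose_mat B $$ (\<sigma> i, j))" N] by simp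
  also have "\<dots> = signof \<sigma> * det (transpose_mat B)"
    using B by (intro det_permute_rows[OF _ \<sigma>]) simp
  also have "\<dots> = signof \<sigma> * signof \<sigma> * det A"
    using det_transpose[OF B] det_permute_rows[OF A \<sigma>] unfolding B_def by simp
  also have "signof \<sigma> * signof \<sigma> = (1 :: 'a)" by (cases \<sigma> rule: sign_cases) auto
  finally show ?thesis by simp
qed

lemma card_eq_sum_card_fibers:
  assumes "finite A" "finite S" "g ` A \<subseteq> S"
  shows "card A = (\<Sum>s\<in>S. card {a \<in> A. g a = s})"
  using sum.group[OF assms, of "\<lambda>_. 1 :: nat"] by simp

lemma card_residue_class:
  fixes b r :: int
  assumes b: "b > 0" and r: "0 \<le> r" "r < b"
  shows "card {y \<in> {0..<int a * b}. y mod b = r} = a"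
proof -
  have "{y \<in> {0..<int a * b}. y mod b = r} = (\<lambda>t. r + b * t) ` {0..<int a}"
  proof (intro equalityI subsetI)
    fix y assume "y \<in> {y \<in> {0..<int a * b}. y mod b = r}"
    then have y: "y mod b = r" "0 \<le> y" "y < int a * b" by auto
    then have y_eq: "y = r + b * (y div b)" using mult_div_mod_eq[of b y] by simp
    have "0 \<le> y div b" using y b by (simp add: pos_imp_zdiv_nonneg_iff)
    moreover have "y div b < int a"
    proof (rule ccontr)
      assume "\<not> y div b < int a"
      then have "b * int a \<le> b * (y div b)" using b by (intro mult_left_mono) auto
      moreover have "int a * b = b * int a" by simp
      ultimately show False using y_eq y r by linarith
    qed
    ultimately show "y \<in> (\<lambda>t. r + b * t) ` {0..<int a}" using y_eq by force
  next
    fix y assume "y \<in> (\<lambda>t. r + b * t) ` {0..<int a}"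
    then obtain t where t: "0 \<le> t" "t < int a" "y = r + b * t" by auto
    have "b * (t + 1) \<le> b * int a" using t b by (intro mult_left_mono) auto
    then show "y \<in> {y \<in> {0..<int a * b}. y mod b = r}"
      using t b r by (simp add: algebra_simps)
  qed
  moreover have "inj_on (\<lambda>t. r + b * t) {0..<int a}" using b by (auto intro: inj_onI)
  ultimately show ?thesis by (simp add: card_image)
qed

lemma prod_lessThan_if:
  "(\<Prod>j<a + b. if j < a then x else y) = (x::'a::comm_monoid_mult) ^ a * y ^ b"
  by (induction b) (simp_all add: lessThan_Suc ac_simps)

definition pmults :: "nat \<Rightarrow> nat \<Rightarrow> int set" where
  "pmults p q = {x \<in> {0..<int q}. int p dvd x}"

lemma pmults_eq_image:
  assumes "p > 0" "q = p * Q"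
  shows "pmults p q = (\<lambda>y. int p * y) ` {0..<int Q}"
proof (intro equalityI subsetI)
  fix x assume "x \<in> pmults p q"
  then obtain y where x: "x = int p * y" "0 \<le> x" "x < int q" unfolding pmults_def by (auto elim: dvdE)
  then have "0 \<le> y" "y < int Q" using assms by (simp_all add: zero_le_mult_iff)
  then show "x \<in> (\<lambda>y. int p * y) ` {0..<int Q}" using x by auto
qed (use assms in \<open>auto simp: pmults_def\<close>)

lemma card_pmults:
  assumes "p > 0" "q = p * Q"
  shows "card (pmults p q) = Q"
proof -
  have "inj_on (\<lambda>y. int p * y) {0..<int Q}" using assms by (auto intro: inj_onI)
  then show ?thesis unfolding pmults_eq_image[OF assms] by (simp add: card_image)
qed

lemma finite_pmults: "finite (pmults p q)"
  unfolding pmults_def by (rule finite_subset[of _ "{0..<int q}"]) auto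

definition sym_mats_over :: "nat \<Rightarrow> 'a set \<Rightarrow> 'a mat set" where
  "sym_mats_over N D =
     {M \<in> carrier_mat N N. \<forall>i<N. \<forall>j<N. M $$ (i,j) = M $$ (j,i) \<and> M $$ (i,j) \<in> D}"

definition upper_indices :: "nat \<Rightarrow> (nat \<times> nat) set" where
  "upper_indices N = {(i,j). i \<le> j \<and> j < N}"

definition upper_part :: "nat \<Rightarrow> 'a mat \<Rightarrow> nat \<times> nat \<Rightarrow> 'a" where
  "upper_part N M = restrict (\<lambda>ij. M $$ ij) (upper_indices N)"

definition sym_of_upper :: "nat \<Rightarrow> (nat \<times> nat \<Rightarrow> 'a) \<Rightarrow> 'a mat" where
  "sym_of_upper N f = mat N N (\<lambda>(i,j). if i \<le> j then f (i,j) else f (j,i))"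

lemma sym_mats_over_carrier: "M \<in> sym_mats_over N D \<Longrightarrow> M \<in> carrier_mat N N"
  unfolding sym_mats_over_def by auto

lemma finite_upper_indices: "finite (upper_indices N)"
  by (rule finite_subset[of _ "{..<N} \<times> {..<N}"]) (auto simp: upper_indices_def)

lemma card_upper_indices: "card (upper_indices N) = N * (N + 1) div 2"
proof (induction N)
  case (Suc N)
  have "upper_indices (Suc N) = upper_indices N \<union> (\<lambda>i. (i, N)) ` {..N}"
    by (auto simp: upper_indices_def)
  moreover have "upper_indices N \<inter> (\<lambda>i. (i, N)) ` {..N} = {}"
    by (auto simp: upper_indices_def)
  moreover have "card ((\<lambda>i. (i, N)) ` {..N}) = Suc N" by (simp add: card_image inj_on_def)
  ultimately have "card (upper_indices (Suc N)) = card (upper_indices N) + Suc N"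
    by (simp add: card_Un_disjoint finite_upper_indices)
  then show ?case using Suc.IH by simp
qed (simp add: upper_indices_def)

lemma bij_betw_upper_part:
  "bij_betw (upper_part N) {M \<in> sym_mats_over N D. \<forall>u\<in>upper_indices N. M $$ u \<in> F u}
     (PiE (upper_indices N) (\<lambda>u. D \<inter> F u))"
proof (rule bij_betw_byWitness[where f' = "sym_of_upper N"])
  let ?S = "{M \<in> sym_mats_over N D. \<forall>u\<in>upper_indices N. M $$ u \<in> F u}"
  let ?P = "PiE (upper_indices N) (\<lambda>u. D \<inter> F u)"
  have entries: "f (i,j) \<in> D \<inter> F (i,j)" if "f \<in> ?P" "i \<le> j" "j < N" for f i j
    using that unfolding upper_indices_def by auto
  show "\<forall>M\<in>?S. sym_of_upper N (upper_part N M) = M"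
    unfolding sym_of_upper_def upper_part_def upper_indices_def sym_mats_over_def
    by (auto intro!: eq_matI)
  show "\<forall>f\<in>?P. upper_part N (sym_of_upper N f) = f"
    unfolding upper_part_def sym_of_upper_def upper_indices_def
    by (auto simp: PiE_def extensional_def fun_eq_iff)
  show "upper_part N ` ?S \<subseteq> ?P"
  proof (rule image_subsetI)
    fix M assume "M \<in> ?S"
    then show "upper_part N M \<in> ?P"
      unfolding upper_part_def restrict_PiE_iff by (auto simp: upper_indices_def sym_mats_over_def)
  qed
  show "sym_of_upper N ` ?P \<subseteq> ?S"
    using entries unfolding sym_of_upper_def sym_mats_over_def upper_indices_def by auto
qed

lemma card_sym_mats_over:
  assumes "finite D"
  shows "card (sym_mats_over N D) = card D ^ (N * (N + 1) div 2)"
proof -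
  have "card (sym_mats_over N D) = card (PiE (upper_indices N) (\<lambda>_. D))"
    using bij_betw_same_card[OF bij_betw_upper_part[of N D "\<lambda>_. UNIV"]] by simp
  then show ?thesis by (simp add: card_PiE finite_upper_indices card_upper_indices)
qed

lemma finite_sym_mats_over:
  assumes "finite D"
  shows "finite (sym_mats_over N D)"
  using bij_betw_finite[OF bij_betw_upper_part[of N D "\<lambda>_. UNIV"]] assms
  by (simp add: finite_PiE finite_upper_indices)

lemma card_map_mat_fiber:
  assumes M': "M' \<in> sym_mats_over N E"
    and fiber: "\<And>e. e \<in> E \<Longrightarrow> card {d \<in> D. g d = e} = c"
  shows "card {M \<in> sym_mats_over N D. map_mat g M = M'} = c ^ (N * (N + 1) div 2)"
proof -
  have "{M \<in> sym_mats_over N D. map_mat g M = M'}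
      = {M \<in> sym_mats_over N D. \<forall>u\<in>upper_indices N. g (M $$ u) = M' $$ u}"
    using M' unfolding sym_mats_over_def upper_indices_def
    by (auto intro!: eq_matI) (metis linorder_le_cases)
  then have "card {M \<in> sym_mats_over N D. map_mat g M = M'}
      = card (PiE (upper_indices N) (\<lambda>u. D \<inter> {d. g d = M' $$ u}))"
    using bij_betw_same_card[OF bij_betw_upper_part[of N D "\<lambda>u. {d. g d = M' $$ u}"]] by simp
  also have "\<dots> = (\<Prod>u\<in>upper_indices N. card (D \<inter> {d. g d = M' $$ u}))"
    by (simp add: card_PiE finite_upper_indices)
  also have "\<dots> = (\<Prod>u\<in>upper_indices N. c)"
  proof (rule prod.cong[OF refl])
    fix u assume "u \<in> upper_indices N"
    then have "M' $$ u \<in> E" using M' unfolding sym_mats_over_def upper_indices_def by auto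
    then show "card (D \<inter> {d. g d = M' $$ u}) = c" using fiber by (simp add: Int_def)
  qed
  finally show ?thesis by (simp add: card_upper_indices)
qed

lemma card_sym_mats_pullback:
  assumes "finite D" "finite E" "g ` D \<subseteq> E"
    and fiber: "\<And>e. e \<in> E \<Longrightarrow> card {d \<in> D. g d = e} = c"
  shows "card {M \<in> sym_mats_over N D. P (map_mat g M)}
    = c ^ (N * (N + 1) div 2) * card {M' \<in> sym_mats_over N E. P M'}"
proof -
  have "map_mat g M \<in> sym_mats_over N E" if "M \<in> sym_mats_over N D" for M
    using that assms(3) unfolding sym_mats_over_def by auto
  then have "card {M \<in> sym_mats_over N D. P (map_mat g M)}
      = (\<Sum>M'\<in>{M' \<in> sym_mats_over N E. P M'}.
           card {M \<in> {M \<in> sym_mats_over N D. P (map_mat g M)}. map_mat g M = M'})"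
    using assms by (intro card_eq_sum_card_fibers) (auto simp: finite_sym_mats_over)
  also have "\<dots> = (\<Sum>M'\<in>{M' \<in> sym_mats_over N E. P M'}. c ^ (N * (N + 1) div 2))"
  proof (rule sum.cong[OF refl])
    fix M' assume M': "M' \<in> {M' \<in> sym_mats_over N E. P M'}"
    then have "{M \<in> {M \<in> sym_mats_over N D. P (map_mat g M)}. map_mat g M = M'}
        = {M \<in> sym_mats_over N D. map_mat g M = M'}" by auto
    then show "card {M \<in> {M \<in> sym_mats_over N D. P (map_mat g M)}. map_mat g M = M'}
        = c ^ (N * (N + 1) div 2)"
      using card_map_mat_fiber[of M' N E D g c] M' fiber by simp
  qed
  finally show ?thesis by simp
qed

lemma card_sym_mats_mod:
  assumes q: "q > 0"
  shows "card {M \<in> sym_mats_over N {1..int q}. P (map_mat (\<lambda>x. x mod int q) M)}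
    = card {M' \<in> sym_mats_over N {0..<int q}. P M'}"
proof -
  have "{d \<in> {1..int q}. d mod int q = e} = {if e = 0 then int q else e}" if "e \<in> {0..<int q}" for e
  proof (cases "e = 0")
    case True
    have "d \<in> {1..int q} \<Longrightarrow> int q dvd d \<longleftrightarrow> d = int q" for d
      using q zdvd_imp_le[of "int q" d] by auto
    then show ?thesis using True q by auto
  next
    case False
    have "d \<in> {1..int q} \<Longrightarrow> d mod int q = e \<longleftrightarrow> d = e" for d
      using False that by (cases "d = int q") auto
    then show ?thesis using False that by auto
  qed
  then have "card {M \<in> sym_mats_over N {1..int q}. P (map_mat (\<lambda>x. x mod int q) M)}
      = 1 ^ (N * (N + 1) div 2) * card {M' \<in> sym_mats_over N {0..<int q}. P M'}"
    using q by (intro card_sym_mats_pullback) auto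
  then show ?thesis by simp
qed

section \<open>Symmetric matrices with a border divisible by \<open>p\<close>\<close>

definition border_entries :: "nat \<Rightarrow> nat \<Rightarrow> nat \<Rightarrow> nat \<Rightarrow> nat \<Rightarrow> int set" where
  "border_entries p q n i j = (if i < n \<and> j < n then {0..<int q} else pmults p q)"

text \<open>Representatives modulo \<open>q\<close> of the symmetric matrices \<open>[[A, p B], [p B\<^sup>T, p C]]\<close> with \<open>A\<close>
  of size \<open>n\<close> and \<open>C\<close> of size \<open>k\<close>.\<close>

definition border_mats :: "nat \<Rightarrow> nat \<Rightarrow> nat \<Rightarrow> nat \<Rightarrow> bool \<Rightarrow> int mat set" where
  "border_mats p q k n b = {M \<in> carrier_mat (n+k) (n+k).
     (\<forall>i<n+k. \<forall>j<n+k. M $$ (i,j) = M $$ (j,i) \<and> M $$ (i,j) \<in> border_entries p q n i j)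
     \<and> (b \<longrightarrow> \<not> int q dvd det M)}"

lemma border_entries_sym: "border_entries p q n i j = border_entries p q n j i"
  unfolding border_entries_def by auto

lemma border_entries_subset: "border_entries p q n i j \<subseteq> {0..<int q}"
  unfolding border_entries_def pmults_def by auto

lemma finite_border_entries: "finite (border_entries p q n i j)"
  using border_entries_subset by (rule finite_subset) simp

lemma border_matsD:
  assumes "M \<in> border_mats p q k n b"
  shows "M \<in> carrier_mat (n+k) (n+k)"
    and "\<And>i j. i < n+k \<Longrightarrow> j < n+k \<Longrightarrow> M $$ (i,j) = M $$ (j,i)"
    and "\<And>i j. i < n+k \<Longrightarrow> j < n+k \<Longrightarrow> M $$ (i,j) \<in> border_entries p q n i j"
    and "b \<Longrightarrow> \<not> int q dvd det M"
  using assms unfolding border_mats_def by auto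

lemma border_mats_True: "border_mats p q k n True = {M \<in> border_mats p q k n False. \<not> int q dvd det M}"
  unfolding border_mats_def by auto

lemma border_mats_subset: "border_mats p q k n b \<subseteq> sym_mats_over (n+k) {0..<int q}"
  using border_entries_subset unfolding border_mats_def sym_mats_over_def by blast

lemma finite_border_mats: "finite (border_mats p q k n b)"
  using border_mats_subset by (rule finite_subset) (simp add: finite_sym_mats_over)

lemma border_mats_no_border:
  "border_mats p q 0 n b = {M \<in> sym_mats_over n {0..<int q}. b \<longrightarrow> \<not> int q dvd det M}"
  unfolding border_mats_def sym_mats_over_def border_entries_def by auto

lemma border_mats_only_border:
  "border_mats p q k 0 b = {M \<in> sym_mats_over k (pmults p q). b \<longrightarrow> \<not> int q dvd det M}"
  unfolding border_mats_def sym_mats_over_def border_entries_def by auto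

lemma card_border_mats_False_pos:
  assumes "q > 0"
  shows "card (border_mats p q k n False) > 0"
proof -
  have "0\<^sub>m (n+k) (n+k) \<in> border_mats p q k n False"
    using assms unfolding border_mats_def border_entries_def pmults_def by auto
  then show ?thesis using finite_border_mats card_gt_0_iff by blast
qed

lemma permute_mat_in_border_mats:
  assumes M: "M \<in> border_mats p q k' n' b" and dim: "n' + k' = n + k"
    and \<sigma>: "\<sigma> permutes {0..<n+k}"
    and entries: "\<And>i j. i < n+k \<Longrightarrow> j < n+k \<Longrightarrow> M $$ (\<sigma> i, \<sigma> j) \<in> border_entries p q n i j"
  shows "permute_mat \<sigma> (n+k) M \<in> border_mats p q k n b"
proof -
  have M_carrier: "M \<in> carrier_mat (n+k) (n+k)" using border_matsD(1)[OF M] dim by simp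
  have "\<sigma> i < n+k" if "i < n+k" for i using permutes_in_image[OF \<sigma>] that by simp
  then have "M $$ (\<sigma> i, \<sigma> j) = M $$ (\<sigma> j, \<sigma> i)" if "i < n+k" "j < n+k" for i j
    using border_matsD(2)[OF M] that dim by simp
  moreover have "b \<longrightarrow> \<not> int q dvd det (permute_mat \<sigma> (n+k) M)"
    using border_matsD(4)[OF M] det_permute_mat[OF M_carrier \<sigma>] by simp
  ultimately show ?thesis using entries unfolding border_mats_def permute_mat_def by auto
qed

subsection \<open>Fixing the first rows: a Schur complement argument\<close>

definition upper_left :: "'a mat \<Rightarrow> nat \<Rightarrow> 'a mat" where
  "upper_left M m = mat m m (\<lambda>(i,j). M $$ (i,j))"

definition upper_right :: "'a mat \<Rightarrow> nat \<Rightarrow> nat \<Rightarrow> 'a mat" where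
  "upper_right M m N = mat m N (\<lambda>(i,j). M $$ (i, m+j))"

definition lower_left :: "'a mat \<Rightarrow> nat \<Rightarrow> nat \<Rightarrow> 'a mat" where
  "lower_left M m N = mat N m (\<lambda>(i,j). M $$ (m+i, j))"

definition lower_right :: "'a mat \<Rightarrow> nat \<Rightarrow> nat \<Rightarrow> 'a mat" where
  "lower_right M m N = mat N N (\<lambda>(i,j). M $$ (m+i, m+j))"

definition with_lower_right :: "'a mat \<Rightarrow> nat \<Rightarrow> nat \<Rightarrow> 'a mat \<Rightarrow> 'a mat" where
  "with_lower_right M m N A = four_block_mat (upper_left M m) (upper_right M m N) (lower_left M m N) A"

lemma with_lower_right_carrier:
  "A \<in> carrier_mat N N \<Longrightarrow> with_lower_right M m N A \<in> carrier_mat (m+N) (m+N)"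
  unfolding with_lower_right_def upper_left_def by simp

lemma with_lower_right_index:
  assumes "A \<in> carrier_mat N N" "i < m+N" "j < m+N"
  shows "with_lower_right M m N A $$ (i,j) = (if i < m \<or> j < m then M $$ (i,j) else A $$ (i-m, j-m))"
  using assms unfolding with_lower_right_def upper_left_def upper_right_def lower_left_def
  by (auto simp: index_mat_four_block)

lemma inj_on_with_lower_right: "inj_on (with_lower_right M m N) (carrier_mat N N)"
proof (rule inj_onI)
  fix A A' assume A: "A \<in> carrier_mat N N" "A' \<in> carrier_mat N N"
    and eq: "with_lower_right M m N A = with_lower_right M m N A'"
  show "A = A'"
  proof (rule eq_matI)
    fix i j assume "i < dim_row A'" "j < dim_col A'"
    then show "A $$ (i,j) = A' $$ (i,j)"
      using arg_cong[OF eq, of "\<lambda>X. X $$ (m+i, m+j)"] A by (simp add: with_lower_right_index)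
  qed (use A in auto)
qed

lemma with_lower_right_lower_right:
  assumes M: "M \<in> carrier_mat (m+N) (m+N)" and M0: "M0 \<in> carrier_mat (m+N) (m+N)"
    and sym: "\<And>i j. i < m+N \<Longrightarrow> j < m+N \<Longrightarrow> M $$ (i,j) = M $$ (j,i)"
    and sym0: "\<And>i j. i < m+N \<Longrightarrow> j < m+N \<Longrightarrow> M0 $$ (i,j) = M0 $$ (j,i)"
    and top: "\<And>i j. i < m \<Longrightarrow> j < m+N \<Longrightarrow> M $$ (i,j) = M0 $$ (i,j)"
  shows "with_lower_right M0 m N (lower_right M m N) = M"
proof (rule eq_matI)
  fix i j assume "i < dim_row M" "j < dim_col M"
  then have ij: "i < m+N" "j < m+N" using M by auto
  have "M $$ (i,j) = M0 $$ (i,j)" if "i < m \<or> j < m"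
    using that top[of i j] top[of j i] sym[OF ij] sym0[OF ij] ij by auto
  then show "with_lower_right M0 m N (lower_right M m N) $$ (i,j) = M $$ (i,j)"
    using ij by (cases "i < m \<or> j < m") (auto simp: with_lower_right_index lower_right_def)
qed (use M with_lower_right_carrier[of "lower_right M m N" N M0 m] in \<open>auto simp: lower_right_def\<close>)

lemma lower_right_in_border_mats:
  assumes "M \<in> border_mats p q k (m+n) b'"
  shows "lower_right M m (n+k) \<in> border_mats p q k n False"
  using border_matsD(2,3)[OF assms, of "m+_" "m+_"]
  unfolding border_mats_def lower_right_def border_entries_def by auto

lemma with_lower_right_in_border_mats:
  assumes M0: "M0 \<in> border_mats p q k (m+n) False" and A: "A \<in> border_mats p q k n False"
  shows "with_lower_right M0 m (n+k) A \<in> border_mats p q k (m+n) False"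
proof -
  note M0D = border_matsD[OF M0] and AD = border_matsD[OF A]
  let ?M = "with_lower_right M0 m (n+k) A"
  have idx: "?M $$ (i,j) = (if i < m \<or> j < m then M0 $$ (i,j) else A $$ (i-m, j-m))"
    if "i < m+n+k" "j < m+n+k" for i j
    using with_lower_right_index[OF AD(1)] that by (simp add: add.assoc)
  have "?M $$ (i,j) = ?M $$ (j,i) \<and> ?M $$ (i,j) \<in> border_entries p q (m+n) i j"
    if ij: "i < m+n+k" "j < m+n+k" for i j
  proof (cases "i < m \<or> j < m")
    case True
    then show ?thesis using idx[OF ij] idx[OF ij(2,1)] M0D(2,3)[OF ij] by auto
  next
    case False
    then have "A $$ (i-m, j-m) = A $$ (j-m, i-m)"
      and "A $$ (i-m, j-m) \<in> border_entries p q n (i-m) (j-m)"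
      using AD(2,3) ij by auto
    moreover have "border_entries p q n (i-m) (j-m) = border_entries p q (m+n) i j"
      using False unfolding border_entries_def by auto
    ultimately show ?thesis using idx[OF ij] idx[OF ij(2,1)] False by auto
  qed
  moreover have "?M \<in> carrier_mat (m+n+k) (m+n+k)"
    using with_lower_right_carrier[OF AD(1)] by (simp add: add.assoc)
  ultimately show ?thesis unfolding border_mats_def by auto
qed

lemma upper_rows_fiber_eq_image:
  assumes M0: "M0 \<in> border_mats p q k (m+n) False"
  shows "{M \<in> border_mats p q k (m+n) b. \<forall>i<m. \<forall>j<m+n+k. M $$ (i,j) = M0 $$ (i,j)}
     = with_lower_right M0 m (n+k) `
         {A \<in> border_mats p q k n False. b \<longrightarrow> \<not> int q dvd det (with_lower_right M0 m (n+k) A)}"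
    (is "?L = ?R")
proof
  show "?L \<subseteq> ?R"
  proof
    fix M assume M: "M \<in> ?L"
    then have Mb: "M \<in> border_mats p q k (m+n) b" by simp
    have "with_lower_right M0 m (n+k) (lower_right M m (n+k)) = M"
      using M border_matsD(1,2)[OF M0] border_matsD(1,2)[OF Mb]
      by (intro with_lower_right_lower_right) (auto simp: add.assoc)
    moreover have "lower_right M m (n+k) \<in> border_mats p q k n False"
      using Mb by (rule lower_right_in_border_mats)
    ultimately show "M \<in> ?R" using border_matsD(4)[OF Mb] by (auto intro!: image_eqI)
  qed
next
  show "?R \<subseteq> ?L"
  proof
    fix M assume "M \<in> ?R"
    then obtain A where A: "A \<in> border_mats p q k n False"
      and b: "b \<longrightarrow> \<not> int q dvd det (with_lower_right M0 m (n+k) A)"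
      and M: "M = with_lower_right M0 m (n+k) A" by blast
    have "M \<in> border_mats p q k (m+n) False"
      unfolding M by (rule with_lower_right_in_border_mats[OF M0 A])
    moreover have "M $$ (i,j) = M0 $$ (i,j)" if "i < m" "j < m+n+k" for i j
      using that border_matsD(1)[OF A] unfolding M by (simp add: with_lower_right_index add.assoc)
    ultimately show "M \<in> ?L" using b M unfolding border_mats_def by auto
  qed
qed

lemma Schur_term_sym:
  fixes M0 Bi :: "'a :: comm_ring_1 mat"
  assumes sym0: "\<And>i j. i < m+N \<Longrightarrow> j < m+N \<Longrightarrow> M0 $$ (i,j) = M0 $$ (j,i)"
    and Bi: "Bi \<in> carrier_mat m m" and sym: "\<And>i j. i < m \<Longrightarrow> j < m \<Longrightarrow> Bi $$ (i,j) = Bi $$ (j,i)"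
    and ij: "i < N" "j < N"
  shows "(lower_left M0 m N * Bi * upper_right M0 m N) $$ (i,j)
       = (lower_left M0 m N * Bi * upper_right M0 m N) $$ (j,i)"
proof -
  let ?D = "lower_left M0 m N" and ?C = "upper_right M0 m N"
  have D: "?D \<in> carrier_mat N m" and C: "?C \<in> carrier_mat m N"
    unfolding lower_left_def upper_right_def by auto
  have tC: "transpose_mat ?C = ?D" and tD: "transpose_mat ?D = ?C"
    unfolding lower_left_def upper_right_def by (auto intro!: eq_matI sym0)
  have tBi: "transpose_mat Bi = Bi" using Bi sym by (intro eq_matI) auto
  have "transpose_mat (?D * Bi * ?C) = transpose_mat ?C * transpose_mat (?D * Bi)"
    using D Bi C by (intro transpose_mult[of _ N m]) auto
  also have "transpose_mat (?D * Bi) = transpose_mat Bi * transpose_mat ?D"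
    using D Bi by (intro transpose_mult[of _ N m]) auto
  finally have "transpose_mat (?D * Bi * ?C) = ?D * Bi * ?C"
    unfolding tC tD tBi using D Bi C by simp
  then show ?thesis using ij D C Bi by (metis carrier_matD index_mult_mat(2,3) index_transpose_mat(1))
qed

lemma Schur_term_dvd:
  fixes Bi :: "int mat"
  assumes M0: "M0 \<in> border_mats p q k (m+n) False" and Bi: "Bi \<in> carrier_mat m m"
    and ij: "i < n+k" "j < n+k" "\<not> (i < n \<and> j < n)"
  shows "int p dvd (lower_left M0 m (n+k) * Bi * upper_right M0 m (n+k)) $$ (i,j)"
proof -
  let ?D = "lower_left M0 m (n+k)" and ?C = "upper_right M0 m (n+k)"
  note entries = border_matsD(3)[OF M0]
  have D: "?D \<in> carrier_mat (n+k) m" and C: "?C \<in> carrier_mat m (n+k)"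
    unfolding lower_left_def upper_right_def by auto
  have prod: "(?D * Bi * ?C) $$ (i,j) = (\<Sum>l = 0..<m. (?D * Bi) $$ (i,l) * ?C $$ (l,j))"
    using D Bi C ij by (simp add: scalar_prod_def del: assoc_mult_mat)
  show ?thesis
  proof (cases "i < n")
    case True
    then have "int p dvd ?C $$ (l,j)" if "l < m" for l
      using entries[of l "m+j"] that ij unfolding upper_right_def border_entries_def pmults_def by auto
    then show ?thesis unfolding prod by (intro dvd_sum) auto
  next
    case False
    have "int p dvd (?D * Bi) $$ (i,l)" if "l < m" for l
    proof -
      have "int p dvd ?D $$ (i,l')" if "l' < m" for l'
        using entries[of "m+i" l'] that ij False unfolding lower_left_def border_entries_def pmults_def
        by auto
      moreover have "(?D * Bi) $$ (i,l) = (\<Sum>l' = 0..<m. ?D $$ (i,l') * Bi $$ (l',l))"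
        using D Bi ij that by (simp add: scalar_prod_def)
      ultimately show ?thesis by (auto intro: dvd_sum)
    qed
    then show ?thesis unfolding prod by (intro dvd_sum) auto
  qed
qed

definition translate_mod :: "int \<Rightarrow> int mat \<Rightarrow> int mat \<Rightarrow> int mat" where
  "translate_mod q T A = mat (dim_row A) (dim_col A) (\<lambda>ij. (A $$ ij + T $$ ij) mod q)"

lemma translate_mod_in_border_mats:
  assumes A: "A \<in> border_mats p q k n False" and q: "q > 0" "p dvd q"
    and T: "T \<in> carrier_mat (n+k) (n+k)"
    and sym: "\<And>i j. i < n+k \<Longrightarrow> j < n+k \<Longrightarrow> T $$ (i,j) = T $$ (j,i)"
    and dvd: "\<And>i j. i < n+k \<Longrightarrow> j < n+k \<Longrightarrow> \<not> (i < n \<and> j < n) \<Longrightarrow> int p dvd T $$ (i,j)"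
  shows "translate_mod (int q) T A \<in> border_mats p q k n False"
proof -
  note AD = border_matsD[OF A]
  have "(A $$ (i,j) + T $$ (i,j)) mod int q \<in> border_entries p q n i j"
    if ij: "i < n+k" "j < n+k" for i j
    using AD(3)[OF ij] dvd[OF ij] q
    by (auto simp: border_entries_def pmults_def dvd_mod_iff split: if_splits)
  then show ?thesis
    using AD(1,2) sym unfolding border_mats_def translate_mod_def by auto
qed

lemma translate_mod_inverse:
  assumes A: "A \<in> border_mats p q k n False" and T: "T \<in> carrier_mat (n+k) (n+k)"
  shows "translate_mod (int q) T (translate_mod (int q) (- T) A) = A"
proof (rule eq_matI)
  fix i j assume "i < dim_row A" "j < dim_col A"
  then have ij: "i < n+k" "j < n+k" using border_matsD(1)[OF A] by auto
  have "A $$ (i,j) \<in> {0..<int q}"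
    using border_matsD(3)[OF A ij] border_entries_subset by blast
  then show "translate_mod (int q) T (translate_mod (int q) (- T) A) $$ (i,j) = A $$ (i,j)"
    using ij T border_matsD(1)[OF A] unfolding translate_mod_def by (simp add: mod_add_left_eq)
qed (simp_all add: translate_mod_def)

lemma card_translate_mod_nonsing:
  assumes q: "q > 0" "p dvd q" and T: "T \<in> carrier_mat (n+k) (n+k)"
    and sym: "\<And>i j. i < n+k \<Longrightarrow> j < n+k \<Longrightarrow> T $$ (i,j) = T $$ (j,i)"
    and dvd: "\<And>i j. i < n+k \<Longrightarrow> j < n+k \<Longrightarrow> \<not> (i < n \<and> j < n) \<Longrightarrow> int p dvd T $$ (i,j)"
  shows "card {A \<in> border_mats p q k n False. \<not> int q dvd det (A - T)} = card (border_mats p q k n True)"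
proof (rule bij_betw_same_card, rule bij_betw_byWitness[where f' = "translate_mod (int q) T"])
  let ?X = "{A \<in> border_mats p q k n False. \<not> int q dvd det (A - T)}"
  have mT: "- T \<in> carrier_mat (n+k) (n+k)" using T by simp
  have shift_T: "translate_mod (int q) T A \<in> border_mats p q k n False"
    and shift_mT: "translate_mod (int q) (- T) A \<in> border_mats p q k n False"
    if "A \<in> border_mats p q k n False" for A
    using translate_mod_in_border_mats[OF that q T sym dvd]
      translate_mod_in_border_mats[OF that q mT] T sym dvd by auto
  have det_shift: "det (translate_mod (int q) (- T) A) mod int q = det (A - T) mod int q"
    if "A \<in> border_mats p q k n False" for A
    using border_matsD(1)[OF that] T
    by (intro det_mod_cong[of _ "n+k"]) (auto simp: translate_mod_def)
  show "\<forall>A\<in>?X. translate_mod (int q) T (translate_mod (int q) (- T) A) = A"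
    using translate_mod_inverse T by blast
  show "\<forall>S\<in>border_mats p q k n True. translate_mod (int q) (- T) (translate_mod (int q) T S) = S"
    using translate_mod_inverse[OF _ mT] T unfolding border_mats_True by auto
  show "translate_mod (int q) (- T) ` ?X \<subseteq> border_mats p q k n True"
    using shift_mT det_shift unfolding border_mats_True by (auto simp: dvd_eq_mod_eq_0)
  show "translate_mod (int q) T ` border_mats p q k n True \<subseteq> ?X"
  proof (rule image_subsetI)
    fix S assume S: "S \<in> border_mats p q k n True"
    then have S': "S \<in> border_mats p q k n False" unfolding border_mats_True by simp
    have "translate_mod (int q) (- T) (translate_mod (int q) T S) = S"
      using translate_mod_inverse[OF S' mT] T by simp
    then show "translate_mod (int q) T S \<in> ?X"
      using shift_T[OF S'] det_shift[OF shift_T[OF S']] border_matsD(4)[OF S]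
      by (auto simp: dvd_eq_mod_eq_0)
  qed
qed

locale prime_power =
  fixes p q \<mu> :: nat
  assumes prime: "prime p" and q_def: "q = p ^ \<mu>" and \<mu>_pos: "\<mu> \<ge> 1"
begin

lemma p_gt_1: "p > 1"
  using prime prime_gt_1_nat by simp

lemma q_pos: "q > 0"
  using p_gt_1 q_def by simp

lemma q_eq: "q = p * p ^ (\<mu> - 1)"
  using \<mu>_pos q_def by (cases \<mu>) auto

lemma p_dvd_q: "p dvd q"
  using q_eq by simp

lemma coprime_q_iff: "coprime x (int q) \<longleftrightarrow> \<not> int p dvd x"
proof -
  have "prime (int p)" using prime by simp
  then have "coprime x (int p) \<longleftrightarrow> \<not> int p dvd x"
    by (metis coprime_commute prime_imp_coprime coprime_absorb_left not_prime_unit)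
  then show ?thesis using \<mu>_pos unfolding q_def by simp
qed

lemma with_lower_right_Schur_complement:
  assumes M0: "M0 \<in> border_mats p q k (m+n) False" and unit: "\<not> int p dvd det (upper_left M0 m)"
  obtains T where "T \<in> carrier_mat (n+k) (n+k)"
    "\<And>i j. i < n+k \<Longrightarrow> j < n+k \<Longrightarrow> T $$ (i,j) = T $$ (j,i)"
    "\<And>i j. i < n+k \<Longrightarrow> j < n+k \<Longrightarrow> \<not> (i < n \<and> j < n) \<Longrightarrow> int p dvd T $$ (i,j)"
    "\<And>A. A \<in> carrier_mat (n+k) (n+k) \<Longrightarrow>
       int q dvd det (with_lower_right M0 m (n+k) A) \<longleftrightarrow> int q dvd det (A - T)"
proof -
  let ?B = "upper_left M0 m"
  have B: "?B \<in> carrier_mat m m" by (simp add: upper_left_def)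
  have "?B $$ (i,j) = ?B $$ (j,i)" if "i < m" "j < m" for i j
    using border_matsD(2)[OF M0] that by (simp add: upper_left_def)
  moreover have cop: "coprime (det ?B) (int q)" using unit coprime_q_iff by simp
  ultimately obtain Bi where Bi: "Bi \<in> carrier_mat m m"
    and Bi_sym: "\<And>i j. i < m \<Longrightarrow> j < m \<Longrightarrow> Bi $$ (i,j) = Bi $$ (j,i)"
    and inv: "\<And>i j. i < m \<Longrightarrow> j < m \<Longrightarrow> (?B * Bi) $$ (i,j) mod int q = 1\<^sub>m m $$ (i,j) mod int q"
    using sym_mat_inverse_mod[OF B] by metis
  define T where "T = lower_left M0 m (n+k) * Bi * upper_right M0 m (n+k)"
  have "T \<in> carrier_mat (n+k) (n+k)"
    unfolding T_def lower_left_def upper_right_def using Bi by (auto intro!: mult_carrier_mat)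
  moreover have "T $$ (i,j) = T $$ (j,i)" if "i < n+k" "j < n+k" for i j
    unfolding T_def using Schur_term_sym[OF _ Bi Bi_sym that] border_matsD(2)[OF M0]
    by (simp add: add.assoc)
  moreover have "int p dvd T $$ (i,j)" if "i < n+k" "j < n+k" "\<not> (i < n \<and> j < n)" for i j
    unfolding T_def using Schur_term_dvd[OF M0 Bi that] .
  moreover have "int q dvd det (with_lower_right M0 m (n+k) A) \<longleftrightarrow> int q dvd det (A - T)"
    if A: "A \<in> carrier_mat (n+k) (n+k)" for A
  proof -
    have "det (with_lower_right M0 m (n+k) A) mod int q = (det ?B * det (A - T)) mod int q"
      unfolding with_lower_right_def T_def
      by (rule det_four_block_mat_mod[OF B _ _ A Bi inv]) (simp_all add: upper_right_def lower_left_def)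
    then have "int q dvd det (with_lower_right M0 m (n+k) A) \<longleftrightarrow> int q dvd det ?B * det (A - T)"
      by (simp add: dvd_eq_mod_eq_0 mod_mult_right_eq)
    also have "\<dots> \<longleftrightarrow> int q dvd det (A - T)"
      using cop by (simp add: coprime_commute coprime_dvd_mult_right_iff)
    finally show ?thesis .
  qed
  ultimately show thesis using that by blast
qed

lemma card_upper_rows_fiber:
  assumes M0: "M0 \<in> border_mats p q k (m+n) False"
    and unit: "b \<Longrightarrow> \<not> int p dvd det (upper_left M0 m)"
  shows "card {M \<in> border_mats p q k (m+n) b. \<forall>i<m. \<forall>j<m+n+k. M $$ (i,j) = M0 $$ (i,j)}
    = card (border_mats p q k n b)"
proof -
  let ?f = "with_lower_right M0 m (n+k)"
  let ?X = "{A \<in> border_mats p q k n False. b \<longrightarrow> \<not> int q dvd det (?f A)}"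
  have "card {M \<in> border_mats p q k (m+n) b. \<forall>i<m. \<forall>j<m+n+k. M $$ (i,j) = M0 $$ (i,j)}
      = card (?f ` ?X)"
    unfolding upper_rows_fiber_eq_image[OF M0] ..
  also have "\<dots> = card ?X"
    using inj_on_with_lower_right by (rule card_image[OF inj_on_subset]) (auto dest: border_matsD(1))
  also have "card ?X = card (border_mats p q k n b)"
  proof (cases b)
    case True
    obtain T where T: "T \<in> carrier_mat (n+k) (n+k)"
      and sym: "\<And>i j. i < n+k \<Longrightarrow> j < n+k \<Longrightarrow> T $$ (i,j) = T $$ (j,i)"
      and dvd: "\<And>i j. i < n+k \<Longrightarrow> j < n+k \<Longrightarrow> \<not> (i < n \<and> j < n) \<Longrightarrow> int p dvd T $$ (i,j)"
      and det: "\<And>A. A \<in> carrier_mat (n+k) (n+k) \<Longrightarrow> int q dvd det (?f A) \<longleftrightarrow> int q dvd det (A - T)"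
      using with_lower_right_Schur_complement[OF M0 unit[OF True]] by blast
    have "?X = {A \<in> border_mats p q k n False. \<not> int q dvd det (A - T)}"
      using True det by (auto dest: border_matsD(1))
    then show ?thesis using True card_translate_mod_nonsing[OF q_pos p_dvd_q T sym dvd] by simp
  qed simp
  finally show ?thesis .
qed

end

lemma card_eq_by_permute_mat:
  assumes \<sigma>: "\<And>i. i < N \<Longrightarrow> \<sigma> i < N" and \<sigma>': "\<And>i. i < N \<Longrightarrow> \<sigma>' i < N"
    and inv: "\<And>i. i < N \<Longrightarrow> \<sigma> (\<sigma>' i) = i" "\<And>i. i < N \<Longrightarrow> \<sigma>' (\<sigma> i) = i"
    and X: "X \<subseteq> carrier_mat N N" and Y: "Y \<subseteq> carrier_mat N N"
    and XY: "\<And>M. M \<in> X \<Longrightarrow> permute_mat \<sigma> N M \<in> Y"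
    and YX: "\<And>M. M \<in> Y \<Longrightarrow> permute_mat \<sigma>' N M \<in> X"
  shows "card X = card Y"
proof (rule bij_betw_same_card, rule bij_betw_byWitness[where f' = "permute_mat \<sigma>' N"])
  show "\<forall>M\<in>X. permute_mat \<sigma>' N (permute_mat \<sigma> N M) = M"
    using X \<sigma>' inv unfolding permute_mat_def by (auto intro!: eq_matI)
  show "\<forall>M\<in>Y. permute_mat \<sigma> N (permute_mat \<sigma>' N M) = M"
    using Y \<sigma> inv unfolding permute_mat_def by (auto intro!: eq_matI)
qed (use XY YX in auto)

lemma permutes_of_inverses:
  fixes \<sigma> \<sigma>' :: "nat \<Rightarrow> nat"
  assumes "\<And>i. i < N \<Longrightarrow> \<sigma> i < N" "\<And>i. i < N \<Longrightarrow> \<sigma>' i < N"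
    and "\<And>i. i < N \<Longrightarrow> \<sigma> (\<sigma>' i) = i" "\<And>i. i < N \<Longrightarrow> \<sigma>' (\<sigma> i) = i"
    and "\<And>i. i \<ge> N \<Longrightarrow> \<sigma> i = i"
  shows "\<sigma> permutes {0..<N}"
proof (rule bij_imp_permutes)
  show "bij_betw \<sigma> {0..<N} {0..<N}"
    by (rule bij_betw_byWitness[where f' = \<sigma>']) (use assms in auto)
qed (use assms in \<open>auto simp: atLeast0LessThan\<close>)

definition row_fun :: "nat \<Rightarrow> 'a mat \<Rightarrow> nat \<Rightarrow> nat \<Rightarrow> 'a" where
  "row_fun i M N = restrict (\<lambda>j. M $$ (i,j)) {..<N}"

definition first_rows :: "nat \<Rightarrow> nat \<Rightarrow> nat \<Rightarrow> nat \<Rightarrow> (nat \<Rightarrow> int) set" where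
  "first_rows p q n k = PiE {..<Suc n + k} (\<lambda>j. border_entries p q (Suc n) 0 j)"

definition first_row_fiber :: "nat \<Rightarrow> nat \<Rightarrow> nat \<Rightarrow> nat \<Rightarrow> bool \<Rightarrow> (nat \<Rightarrow> int) \<Rightarrow> int mat set" where
  "first_row_fiber p q k n b r = {M \<in> border_mats p q k (Suc n) b. row_fun 0 M (Suc n + k) = r}"

lemma row_fun_eq_iff: "r \<in> PiE {..<N} D \<Longrightarrow> row_fun i M N = r \<longleftrightarrow> (\<forall>j<N. M $$ (i,j) = r j)"
  unfolding row_fun_def by (auto simp: PiE_def extensional_def restrict_def fun_eq_iff)

lemma row_fun_in_first_rows: "M \<in> border_mats p q k (Suc n) b \<Longrightarrow> row_fun 0 M (Suc n + k) \<in> first_rows p q n k"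
  unfolding row_fun_def first_rows_def border_mats_def by auto

lemma finite_first_rows: "finite (first_rows p q n k)"
  unfolding first_rows_def by (intro finite_PiE finite_border_entries) auto

lemma first_rows_Suc_eq:
  "first_rows p q (Suc n) k = PiE {..<Suc (Suc n) + k} (\<lambda>j. border_entries p q (Suc (Suc n)) 1 j)"
  unfolding first_rows_def border_entries_def by auto

lemma card_border_mats_eq_sum_first_row_fibers:
  "card (border_mats p q k (Suc n) b) = (\<Sum>r\<in>first_rows p q n k. card (first_row_fiber p q k n b r))"
  unfolding first_row_fiber_def
  using finite_border_mats finite_first_rows row_fun_in_first_rows
  by (intro card_eq_sum_card_fibers) auto

definition sym_of_rows :: "nat \<Rightarrow> nat \<Rightarrow> (nat \<Rightarrow> nat \<Rightarrow> int) \<Rightarrow> int mat" where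
  "sym_of_rows m N t = mat N N (\<lambda>(i,j). if i < m then t i j else if j < m then t j i else 0)"

lemma sym_of_rows_in_border_mats:
  assumes q: "q > 0" and sym: "\<And>i j. i < m \<Longrightarrow> j < m \<Longrightarrow> t i j = t j i"
    and entries: "\<And>i j. i < m \<Longrightarrow> j < m+n+k \<Longrightarrow> t i j \<in> border_entries p q (m+n) i j"
  shows "sym_of_rows m (m+n+k) t \<in> border_mats p q k (m+n) False"
proof -
  have "0 \<in> border_entries p q (m+n) i j" for i j
    using q unfolding border_entries_def pmults_def by auto
  moreover have "t j i \<in> border_entries p q (m+n) i j" if "j < m" "i < m+n+k" for i j
    using entries[OF that] border_entries_sym by metis
  ultimately show ?thesis unfolding border_mats_def sym_of_rows_def using sym entries by auto
qed

lemma agree_sym_of_rows_iff: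
  "m \<le> N \<Longrightarrow> (\<forall>i<m. \<forall>j<N. M $$ (i,j) = sym_of_rows m N t $$ (i,j)) \<longleftrightarrow> (\<forall>i<m. \<forall>j<N. M $$ (i,j) = t i j)"
  unfolding sym_of_rows_def by auto

lemma upper_left_sym_of_rows: "m \<le> N \<Longrightarrow> upper_left (sym_of_rows m N t) m = mat m m (\<lambda>(i,j). t i j)"
  unfolding upper_left_def sym_of_rows_def by (intro eq_matI) auto

lemma two_rows_eq_sym_of_rows_iff:
  assumes r: "r \<in> PiE {..<N} D" and s: "s \<in> PiE {..<N} D'" and N: "2 \<le> N"
  shows "(row_fun 0 M N = r \<and> row_fun 1 M N = s)
    \<longleftrightarrow> (\<forall>i<2. \<forall>j<N. M $$ (i,j) = sym_of_rows 2 N (\<lambda>i j. if i = 0 then r j else s j) $$ (i,j))"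
proof -
  have "(row_fun 0 M N = r \<and> row_fun 1 M N = s)
      \<longleftrightarrow> (\<forall>j<N. M $$ (0,j) = r j) \<and> (\<forall>j<N. M $$ (1,j) = s j)"
    using row_fun_eq_iff[OF r, of 0 M] row_fun_eq_iff[OF s, of 1 M] by simp
  also have "\<dots> \<longleftrightarrow> (\<forall>i<2. \<forall>j<N. M $$ (i,j) = (if i = 0 then r j else s j))"
    by (auto simp: less_2_cases_iff)
  also have "\<dots> \<longleftrightarrow> (\<forall>i<2. \<forall>j<N. M $$ (i,j) = sym_of_rows 2 N (\<lambda>i j. if i = 0 then r j else s j) $$ (i,j))"
    using agree_sym_of_rows_iff[OF N] by simp
  finally show ?thesis .
qed

context prime_power
begin

lemma card_first_row_fiber_unit:
  assumes r: "r \<in> first_rows p q n k" and unit: "b \<Longrightarrow> \<not> int p dvd r 0"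
  shows "card (first_row_fiber p q k n b r) = card (border_mats p q k n b)"
proof -
  let ?M0 = "sym_of_rows 1 (1+n+k) (\<lambda>_ j. r j)"
  have M0: "?M0 \<in> border_mats p q k (1+n) False"
    using r q_pos unfolding first_rows_def by (intro sym_of_rows_in_border_mats) auto
  have "first_row_fiber p q k n b r
      = {M \<in> border_mats p q k (1+n) b. \<forall>i<1. \<forall>j<1+n+k. M $$ (i,j) = ?M0 $$ (i,j)}"
    using row_fun_eq_iff[OF r[unfolded first_rows_def], of 0] agree_sym_of_rows_iff[of 1 "1+n+k"]
    unfolding first_row_fiber_def by auto
  also have "card \<dots> = card (border_mats p q k n b)"
  proof (rule card_upper_rows_fiber[OF M0])
    have "det (upper_left ?M0 1) = r 0" by (simp add: upper_left_sym_of_rows det_single)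
    then show "\<not> int p dvd det (upper_left ?M0 1)" if b using unit[OF that] by simp
  qed
  finally show ?thesis .
qed

lemma card_second_row_fiber:
  assumes r: "r \<in> first_rows p q (Suc n) k" and r0: "int p dvd r 0" and r1: "\<not> int p dvd r 1"
    and s: "s \<in> first_rows p q (Suc n) k" "s 0 = r 1"
  shows "card {M \<in> first_row_fiber p q k (Suc n) b r. row_fun 1 M (Suc (Suc n) + k) = s}
    = card (border_mats p q k n b)"
proof -
  let ?N = "Suc (Suc n) + k"
  let ?F = "first_row_fiber p q k (Suc n) b r"
  define t :: "nat \<Rightarrow> nat \<Rightarrow> int" where "t i j = (if i = 0 then r j else s j)" for i j
  let ?M0 = "sym_of_rows 2 (2+n+k) t"
  have r_entries: "\<And>j. j < ?N \<Longrightarrow> r j \<in> border_entries p q (2+n) 0 j"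
    and s_entries: "\<And>j. j < ?N \<Longrightarrow> s j \<in> border_entries p q (2+n) 0 j"
    using r s(1) unfolding first_rows_def by auto
  have M0: "?M0 \<in> border_mats p q k (2+n) False"
  proof (rule sym_of_rows_in_border_mats[OF q_pos])
    show "t i j = t j i" if "i < 2" "j < 2" for i j
      using that s unfolding t_def by (auto simp: less_2_cases_iff)
    show "t i j \<in> border_entries p q (2+n) i j" if "i < 2" "j < 2+n+k" for i j
      using that r_entries[of j] s_entries[of j] unfolding t_def border_entries_def
      by (auto simp: less_2_cases_iff)
  qed
  have agree: "(row_fun 0 M ?N = r \<and> row_fun 1 M ?N = s)
      \<longleftrightarrow> (\<forall>i<2. \<forall>j<2+n+k. M $$ (i,j) = ?M0 $$ (i,j))" for M
    using two_rows_eq_sym_of_rows_iff[OF r[unfolded first_rows_def] s(1)[unfolded first_rows_def]]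
    unfolding t_def by simp
  have "2 + n = Suc (Suc n)" by simp
  then have "{M \<in> ?F. row_fun 1 M ?N = s}
      = {M \<in> border_mats p q k (2+n) b. \<forall>i<2. \<forall>j<2+n+k. M $$ (i,j) = ?M0 $$ (i,j)}"
    using agree unfolding first_row_fiber_def by auto
  also have "card \<dots> = card (border_mats p q k n b)"
  proof (rule card_upper_rows_fiber[OF M0])
    have "det (upper_left ?M0 2) = r 0 * s 1 - r 1 * r 1"
      using s by (simp add: upper_left_sym_of_rows det_mat_2 t_def)
    moreover have "\<not> int p dvd r 0 * s 1 - r 1 * r 1"
      using r0 r1 prime by (metis dvd_diff_commute dvd_mult2 dvd_add_right_iff prime_dvd_mult_iff
          prime_nat_int_transfer diff_add_cancel)
    ultimately show "\<not> int p dvd det (upper_left ?M0 2)" by simp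
  qed
  finally show ?thesis .
qed

lemma card_first_row_fiber_offdiag_unit:
  assumes r: "r \<in> first_rows p q (Suc n) k" and r0: "int p dvd r 0" and r1: "\<not> int p dvd r 1"
  shows "card (first_row_fiber p q k (Suc n) b r)
    = card {s \<in> first_rows p q (Suc n) k. s 0 = r 1} * card (border_mats p q k n b)"
proof -
  let ?N = "Suc (Suc n) + k"
  let ?S = "{s \<in> first_rows p q (Suc n) k. s 0 = r 1}"
  let ?F = "first_row_fiber p q k (Suc n) b r"
  have "card ?F = (\<Sum>s\<in>?S. card {M \<in> ?F. row_fun 1 M ?N = s})"
  proof (rule card_eq_sum_card_fibers)
    show "finite ?F" unfolding first_row_fiber_def by (simp add: finite_border_mats)
    show "finite ?S" by (simp add: finite_first_rows)
    show "(\<lambda>M. row_fun 1 M ?N) ` ?F \<subseteq> ?S"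
    proof
      fix s assume "s \<in> (\<lambda>M. row_fun 1 M ?N) ` ?F"
      then obtain M where M: "M \<in> ?F" and s: "s = row_fun 1 M ?N" by blast
      then have Mb: "M \<in> border_mats p q k (Suc (Suc n)) b"
        and row0: "\<forall>j<?N. M $$ (0,j) = r j"
        using row_fun_eq_iff[OF r[unfolded first_rows_def]] unfolding first_row_fiber_def by auto
      have "M $$ (1,0) = r 1" using border_matsD(2)[OF Mb, of 1 0] row0 by auto
      then show "s \<in> ?S"
        unfolding s first_rows_Suc_eq row_fun_def using border_matsD(3)[OF Mb] by auto
    qed
  qed
  also have "\<dots> = (\<Sum>s\<in>?S. card (border_mats p q k n b))"
    using card_second_row_fiber[OF r r0 r1] by (intro sum.cong) auto
  finally show ?thesis by simp
qed

end

lemma permute_mat_first_row_fiber: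
  fixes \<sigma> :: "nat \<Rightarrow> nat"
  assumes \<sigma>: "\<sigma> permutes {0..<Suc n + k}" and \<sigma>0: "\<sigma> 0 = 0"
    and block: "\<And>i. \<sigma> i < Suc n \<longleftrightarrow> i < Suc n"
    and M: "M \<in> first_row_fiber p q k n b r" and r: "r \<in> first_rows p q n k"
  shows "permute_mat \<sigma> (Suc n + k) M \<in> first_row_fiber p q k n b (restrict (r \<circ> \<sigma>) {..<Suc n + k})"
proof -
  let ?N = "Suc n + k"
  have Mb: "M \<in> border_mats p q k (Suc n) b" and row: "\<And>j. j < ?N \<Longrightarrow> M $$ (0,j) = r j"
    using M row_fun_eq_iff[OF r[unfolded first_rows_def]] unfolding first_row_fiber_def by auto
  have \<sigma>_lt: "\<sigma> i < ?N" if "i < ?N" for i using permutes_in_image[OF \<sigma>] that by simp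
  have "permute_mat \<sigma> ?N M \<in> border_mats p q k (Suc n) b"
  proof (rule permute_mat_in_border_mats[OF Mb refl \<sigma>])
    fix i j assume "i < ?N" "j < ?N"
    then have "M $$ (\<sigma> i, \<sigma> j) \<in> border_entries p q (Suc n) (\<sigma> i) (\<sigma> j)"
      using border_matsD(3)[OF Mb] \<sigma>_lt by auto
    moreover have "border_entries p q (Suc n) (\<sigma> i) (\<sigma> j) = border_entries p q (Suc n) i j"
      using block unfolding border_entries_def by simp
    ultimately show "M $$ (\<sigma> i, \<sigma> j) \<in> border_entries p q (Suc n) i j" by simp
  qed
  moreover have "row_fun 0 (permute_mat \<sigma> ?N M) ?N = restrict (r \<circ> \<sigma>) {..<?N}"
    unfolding row_fun_def permute_mat_def using row \<sigma>0 \<sigma>_lt by (auto simp: fun_eq_iff)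
  ultimately show ?thesis unfolding first_row_fiber_def by simp
qed

lemma first_rows_transpose:
  assumes r: "r \<in> first_rows p q n k" and j0: "0 < j0" "j0 < Suc n"
  shows "restrict (r \<circ> Transposition.transpose 1 j0) {..<Suc n + k} \<in> first_rows p q n k"
proof -
  let ?\<sigma> = "Transposition.transpose 1 j0"
  have "r (?\<sigma> j) \<in> border_entries p q (Suc n) 0 j" if "j < Suc n + k" for j
  proof -
    have "?\<sigma> j < Suc n + k" using j0 that by (auto simp: Transposition.transpose_def)
    then have "r (?\<sigma> j) \<in> border_entries p q (Suc n) 0 (?\<sigma> j)"
      using r unfolding first_rows_def by auto
    moreover have "?\<sigma> j < Suc n \<longleftrightarrow> j < Suc n" using j0 by (auto simp: Transposition.transpose_def)
    ultimately show ?thesis unfolding border_entries_def by simp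
  qed
  then show ?thesis unfolding first_rows_def by auto
qed

lemma card_first_row_fiber_transpose:
  assumes r: "r \<in> first_rows p q n k" and j0: "0 < j0" "j0 < Suc n"
  shows "card (first_row_fiber p q k n b r)
    = card (first_row_fiber p q k n b (restrict (r \<circ> Transposition.transpose 1 j0) {..<Suc n + k}))"
proof -
  let ?N = "Suc n + k" and ?\<sigma> = "Transposition.transpose 1 j0"
  let ?r' = "restrict (r \<circ> ?\<sigma>) {..<?N}"
  have \<sigma>: "?\<sigma> permutes {0..<?N}" using j0 by (intro permutes_swap_id) auto
  have \<sigma>_lt: "?\<sigma> i < ?N" if "i < ?N" for i using permutes_in_image[OF \<sigma>] that by simp
  have block: "?\<sigma> i < Suc n \<longleftrightarrow> i < Suc n" for i
    using j0 by (auto simp: Transposition.transpose_def)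
  have \<sigma>0: "?\<sigma> 0 = 0" using j0 by (simp add: Transposition.transpose_def)
  have r': "?r' \<in> first_rows p q n k" using first_rows_transpose[OF r j0] .
  have r_back: "restrict (?r' \<circ> ?\<sigma>) {..<?N} = r"
    using r \<sigma>_lt unfolding first_rows_def by (auto simp: fun_eq_iff PiE_def extensional_def)
  show ?thesis
  proof (rule card_eq_by_permute_mat[OF \<sigma>_lt \<sigma>_lt])
    show "first_row_fiber p q k n b r \<subseteq> carrier_mat ?N ?N"
      and "first_row_fiber p q k n b ?r' \<subseteq> carrier_mat ?N ?N"
      unfolding first_row_fiber_def border_mats_def by auto
  next
    fix M assume "M \<in> first_row_fiber p q k n b r"
    then show "permute_mat ?\<sigma> ?N M \<in> first_row_fiber p q k n b ?r'"
      by (rule permute_mat_first_row_fiber[OF \<sigma> \<sigma>0 block _ r])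
  next
    fix M assume "M \<in> first_row_fiber p q k n b ?r'"
    then show "permute_mat ?\<sigma> ?N M \<in> first_row_fiber p q k n b r"
      using permute_mat_first_row_fiber[OF \<sigma> \<sigma>0 block _ r'] r_back by simp
  qed simp_all
qed

text \<open>Conjugating by the cycle \<open>rot n\<close> of \<open>{0..n}\<close> moves a first row divisible by \<open>p\<close> to
  position \<open>n\<close>, where it becomes part of the border.\<close>

definition rot :: "nat \<Rightarrow> nat \<Rightarrow> nat" where
  "rot n i = (if i < n then Suc i else if i = n then 0 else i)"

definition rot_inv :: "nat \<Rightarrow> nat \<Rightarrow> nat" where
  "rot_inv n i = (if i = 0 then n else if i \<le> n then i - 1 else i)"

lemma rot_facts:
  assumes "n < N" "i < N"
  shows "rot n i < N" "rot_inv n i < N" "rot n (rot_inv n i) = i" "rot_inv n (rot n i) = i"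
  using assms unfolding rot_def rot_inv_def by auto

lemma rot_permutes:
  assumes "n < N"
  shows "rot n permutes {0..<N}" "rot_inv n permutes {0..<N}"
proof -
  note facts = rot_facts[OF assms]
  show "rot n permutes {0..<N}"
  proof (rule permutes_of_inverses[where \<sigma>' = "rot_inv n"])
    show "rot n i = i" if "N \<le> i" for i using that assms by (simp add: rot_def)
  qed (use facts in auto)
  show "rot_inv n permutes {0..<N}"
  proof (rule permutes_of_inverses[where \<sigma>' = "rot n"])
    show "rot_inv n i = i" if "N \<le> i" for i using that assms by (simp add: rot_inv_def)
  qed (use facts in auto)
qed

lemma permute_rot_in_border_mats:
  assumes M: "M \<in> border_mats p q k (Suc n) b" and row: "\<And>j. j < Suc n + k \<Longrightarrow> M $$ (0,j) \<in> pmults p q"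
  shows "permute_mat (rot n) (Suc n + k) M \<in> border_mats p q (Suc k) n b"
proof -
  have "permute_mat (rot n) (n + Suc k) M \<in> border_mats p q (Suc k) n b"
  proof (rule permute_mat_in_border_mats[OF M _ rot_permutes(1)[of n "n + Suc k"]])
    fix i j assume ij: "i < n + Suc k" "j < n + Suc k"
    then have "M $$ (rot n i, rot n j) \<in> border_entries p q (Suc n) (rot n i) (rot n j)"
      and "M $$ (rot n i, 0) = M $$ (0, rot n i)"
      using border_matsD(2,3)[OF M] rot_facts(1)[of n "Suc n + k"] by auto
    then show "M $$ (rot n i, rot n j) \<in> border_entries p q n i j"
      using row rot_facts(1)[of n "Suc n + k"] ij unfolding border_entries_def rot_def
      by (auto split: if_splits)
  qed simp_all
  then show ?thesis by simp
qed

lemma permute_rot_inv_in_border_mats: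
  assumes M: "M \<in> border_mats p q (Suc k) n b"
  shows "permute_mat (rot_inv n) (Suc n + k) M \<in> border_mats p q k (Suc n) b"
    and "row_fun 0 (permute_mat (rot_inv n) (Suc n + k) M) (Suc n + k) \<in> PiE {..<Suc n + k} (\<lambda>_. pmults p q)"
proof -
  show "permute_mat (rot_inv n) (Suc n + k) M \<in> border_mats p q k (Suc n) b"
  proof (rule permute_mat_in_border_mats[OF M _ rot_permutes(2)[of n "Suc n + k"]])
    fix i j assume ij: "i < Suc n + k" "j < Suc n + k"
    then have "M $$ (rot_inv n i, rot_inv n j) \<in> border_entries p q n (rot_inv n i) (rot_inv n j)"
      using border_matsD(3)[OF M] rot_facts(2)[of n "Suc n + k"] by auto
    then show "M $$ (rot_inv n i, rot_inv n j) \<in> border_entries p q (Suc n) i j"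
      using ij unfolding border_entries_def rot_inv_def by (auto simp: pmults_def split: if_splits)
  qed simp_all
  show "row_fun 0 (permute_mat (rot_inv n) (Suc n + k) M) (Suc n + k) \<in> PiE {..<Suc n + k} (\<lambda>_. pmults p q)"
    using border_matsD(3)[OF M, of n "rot_inv n _"] rot_facts(2)[of n "Suc n + k"]
    unfolding row_fun_def permute_mat_def border_entries_def by (auto simp: rot_inv_def pmults_def)
qed

lemma card_first_row_pmults:
  "card {M \<in> border_mats p q k (Suc n) b. row_fun 0 M (Suc n + k) \<in> PiE {..<Suc n + k} (\<lambda>_. pmults p q)}
    = card (border_mats p q (Suc k) n b)"
proof (rule card_eq_by_permute_mat[where \<sigma> = "rot n" and \<sigma>' = "rot_inv n"])
  fix M assume "M \<in> {M \<in> border_mats p q k (Suc n) b.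
      row_fun 0 M (Suc n + k) \<in> PiE {..<Suc n + k} (\<lambda>_. pmults p q)}"
  then show "permute_mat (rot n) (Suc n + k) M \<in> border_mats p q (Suc k) n b"
    unfolding row_fun_def by (intro permute_rot_in_border_mats) (auto simp: PiE_def Pi_def)
next
  fix M assume "M \<in> border_mats p q (Suc k) n b"
  then show "permute_mat (rot_inv n) (Suc n + k) M \<in> {M \<in> border_mats p q k (Suc n) b.
      row_fun 0 M (Suc n + k) \<in> PiE {..<Suc n + k} (\<lambda>_. pmults p q)}"
    using permute_rot_inv_in_border_mats by blast
qed (auto simp: border_mats_def rot_facts[of n "Suc (n + k)"])

definition unit_rows :: "nat \<Rightarrow> nat \<Rightarrow> nat \<Rightarrow> nat \<Rightarrow> (nat \<Rightarrow> int) set" where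
  "unit_rows p q n k = {r \<in> first_rows p q n k. \<not> int p dvd r 0}"

definition pmult_rows :: "nat \<Rightarrow> nat \<Rightarrow> nat \<Rightarrow> nat \<Rightarrow> (nat \<Rightarrow> int) set" where
  "pmult_rows p q n k = PiE {..<Suc n + k} (\<lambda>_. pmults p q)"

definition mixed_rows :: "nat \<Rightarrow> nat \<Rightarrow> nat \<Rightarrow> nat \<Rightarrow> (nat \<Rightarrow> int) set" where
  "mixed_rows p q n k = first_rows p q n k - unit_rows p q n k - pmult_rows p q n k"

lemma first_rows_partition:
  "first_rows p q n k = unit_rows p q n k \<union> mixed_rows p q n k \<union> pmult_rows p q n k"
  "unit_rows p q n k \<inter> mixed_rows p q n k = {}"
  "(unit_rows p q n k \<union> mixed_rows p q n k) \<inter> pmult_rows p q n k = {}"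
  "finite (unit_rows p q n k)" "finite (mixed_rows p q n k)" "finite (pmult_rows p q n k)"
proof -
  have "pmult_rows p q n k \<subseteq> first_rows p q n k"
    unfolding pmult_rows_def first_rows_def border_entries_def pmults_def by (auto simp: PiE_def Pi_def)
  moreover have "unit_rows p q n k \<inter> pmult_rows p q n k = {}"
    unfolding unit_rows_def pmult_rows_def pmults_def by (auto simp: PiE_def Pi_def)
  ultimately show "first_rows p q n k = unit_rows p q n k \<union> mixed_rows p q n k \<union> pmult_rows p q n k"
    "unit_rows p q n k \<inter> mixed_rows p q n k = {}"
    "(unit_rows p q n k \<union> mixed_rows p q n k) \<inter> pmult_rows p q n k = {}"
    "finite (unit_rows p q n k)" "finite (mixed_rows p q n k)" "finite (pmult_rows p q n k)"
    using finite_first_rows[of p q n k] unfolding mixed_rows_def unit_rows_def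
    by (auto intro: finite_subset)
qed

lemma card_border_entries_first_row:
  assumes "p > 0" "q = p * Q"
  shows "card (border_entries p q n 0 j) = (if j < n then q else Q)"
  using card_pmults[OF assms] unfolding border_entries_def by simp

lemma card_first_rows:
  assumes "p > 0" "q = p * Q"
  shows "card (first_rows p q n k) = q ^ Suc n * Q ^ k"
proof -
  have "card (first_rows p q n k) = (\<Prod>j<Suc n + k. card (border_entries p q (Suc n) 0 j))"
    unfolding first_rows_def by (simp add: card_PiE)
  also have "\<dots> = (\<Prod>j<Suc n + k. if j < Suc n then q else Q)"
    using card_border_entries_first_row[OF assms] by simp
  finally show ?thesis by (simp only: prod_lessThan_if)
qed

lemma card_unit_rows:
  assumes "p > 0" "q = p * Q"
  shows "card (unit_rows p q n k) = (q - Q) * q ^ n * Q ^ k"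
proof -
  let ?D = "\<lambda>j. if j = 0 then {0..<int q} - pmults p q else border_entries p q (Suc n) 0 j"
  have "unit_rows p q n k = PiE {..<Suc (n + k)} ?D"
    unfolding unit_rows_def first_rows_def
    by (auto simp: PiE_def Pi_def border_entries_def pmults_def split: if_splits)
  then have "card (unit_rows p q n k) = card (?D 0) * (\<Prod>j<n + k. card (?D (Suc j)))"
    by (simp add: card_PiE prod.lessThan_Suc_shift del: prod.lessThan_Suc)
  moreover have "card (?D 0) = q - Q"
  proof -
    have "pmults p q \<subseteq> {0..<int q}" by (auto simp: pmults_def)
    then have "card ({0..<int q} - pmults p q) = card {0..<int q} - card (pmults p q)"
      by (intro card_Diff_subset) (auto intro: finite_subset)
    then show ?thesis using card_pmults[OF assms] by simp
  qed
  moreover have "(\<Prod>j<n + k. card (?D (Suc j))) = (\<Prod>j<n + k. if j < n then q else Q)"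
    using card_border_entries_first_row[OF assms] by simp
  ultimately show ?thesis by (simp only: prod_lessThan_if mult.assoc)
qed

lemma card_pmult_rows:
  assumes "p > 0" "q = p * Q"
  shows "card (pmult_rows p q n k) = Q ^ Suc (n + k)"
  using card_pmults[OF assms] unfolding pmult_rows_def by (simp add: card_PiE)

lemma sum_pmult_rows_first_row_fiber:
  "(\<Sum>r\<in>pmult_rows p q n k. card (first_row_fiber p q k n b r)) = card (border_mats p q (Suc k) n b)"
proof -
  let ?A = "{M \<in> border_mats p q k (Suc n) b. row_fun 0 M (Suc n + k) \<in> pmult_rows p q n k}"
  have "card ?A = (\<Sum>r\<in>pmult_rows p q n k. card {M \<in> ?A. row_fun 0 M (Suc n + k) = r})"
    using finite_border_mats first_rows_partition(6) by (intro card_eq_sum_card_fibers) auto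
  also have "\<dots> = (\<Sum>r\<in>pmult_rows p q n k. card (first_row_fiber p q k n b r))"
    unfolding first_row_fiber_def by (intro sum.cong refl arg_cong[where f = card]) auto
  finally show ?thesis
    using card_first_row_pmults[of p q k n b] unfolding pmult_rows_def by simp
qed

text \<open>This is \<open>h(k, n)\<close> for \<open>q = p\<^sup>\<mu>\<close>.\<close>

definition border_ratio :: "nat \<Rightarrow> nat \<Rightarrow> nat \<Rightarrow> nat \<Rightarrow> real" where
  "border_ratio p q k n = real (card (border_mats p q k n True)) / real (card (border_mats p q k n False))"

lemma mixed_rows_unit_entry:
  assumes r: "r \<in> mixed_rows p q n k"
  obtains j0 where "0 < j0" "j0 < Suc n" "\<not> int p dvd r j0"
proof -
  have r_first: "r \<in> first_rows p q n k" and r0: "int p dvd r 0" and "r \<notin> pmult_rows p q n k"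
    using r unfolding mixed_rows_def unit_rows_def by auto
  have "\<exists>j0<Suc n + k. r j0 \<notin> pmults p q"
  proof (rule ccontr)
    assume "\<not> ?thesis"
    then have "r \<in> pmult_rows p q n k"
      using r_first unfolding first_rows_def pmult_rows_def by (simp add: PiE_iff)
    then show False using \<open>r \<notin> pmult_rows p q n k\<close> by contradiction
  qed
  then obtain j0 where j0: "j0 < Suc n + k" "r j0 \<notin> pmults p q" by blast
  moreover have "r j0 \<in> border_entries p q (Suc n) 0 j0"
    using r_first j0(1) unfolding first_rows_def by auto
  ultimately have "j0 < Suc n" "\<not> int p dvd r j0"
    unfolding border_entries_def pmults_def by (auto split: if_splits)
  moreover have "j0 \<noteq> 0"
  proof
    assume "j0 = 0"
    with r0 \<open>\<not> int p dvd r j0\<close> show False by simp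
  qed
  ultimately show thesis using that by blast
qed

lemma sum_first_rows_split:
  "(\<Sum>r\<in>first_rows p q n k. f r)
    = (\<Sum>r\<in>unit_rows p q n k. f r) + (\<Sum>r\<in>mixed_rows p q n k. f r) + (\<Sum>r\<in>pmult_rows p q n k. f r)"
  using first_rows_partition[of p q n k] by (simp add: sum.union_disjoint)

lemma card_first_rows_split:
  "card (first_rows p q n k) = card (unit_rows p q n k) + card (mixed_rows p q n k) + card (pmult_rows p q n k)"
  using sum_first_rows_split[of "\<lambda>_. 1 :: nat"] by simp

lemma real_card_border_mats_True:
  assumes "q > 0"
  shows "real (card (border_mats p q k n True)) = real (card (border_mats p q k n False)) * border_ratio p q k n"
  using card_border_mats_False_pos[OF assms, of p k n] unfolding border_ratio_def by simp

context prime_power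
begin

lemma card_border_mats_Suc_False:
  "card (border_mats p q k (Suc n) False) = card (first_rows p q n k) * card (border_mats p q k n False)"
  unfolding card_border_mats_eq_sum_first_row_fibers by (simp add: card_first_row_fiber_unit)

lemma card_border_mats_Suc_border:
  "card (border_mats p q (Suc k) n False) = card (pmult_rows p q n k) * card (border_mats p q k n False)"
  using first_rows_partition(1)
  unfolding sum_pmult_rows_first_row_fiber[symmetric]
  by (simp add: card_first_row_fiber_unit)

lemma card_mixed_row_fiber:
  assumes r: "r \<in> mixed_rows p q n k"
  shows "real (card (first_row_fiber p q k n True r))
    = real (card (border_mats p q k n False)) * border_ratio p q k (n - 1)"
proof -
  have r_first: "r \<in> first_rows p q n k" and r0: "int p dvd r 0"
    using r unfolding mixed_rows_def unit_rows_def by auto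
  obtain j0 where j0: "0 < j0" "j0 < Suc n" and unit: "\<not> int p dvd r j0"
    using mixed_rows_unit_entry[OF r] by blast
  then obtain n' where n': "n = Suc n'" by (cases n) auto
  let ?r' = "restrict (r \<circ> Transposition.transpose 1 j0) {..<Suc n + k}"
  have r': "?r' \<in> first_rows p q n k" using first_rows_transpose[OF r_first j0] .
  define c where "c = card {s \<in> first_rows p q (Suc n') k. s 0 = ?r' 1}"
  have fiber: "card (first_row_fiber p q k n b r) = c * card (border_mats p q k n' b)" for b
  proof -
    have "card (first_row_fiber p q k n b r) = card (first_row_fiber p q k n b ?r')"
      by (rule card_first_row_fiber_transpose[OF r_first j0])
    also have "\<dots> = c * card (border_mats p q k n' b)"
      unfolding c_def n' using r' r0 j0 unit
      by (intro card_first_row_fiber_offdiag_unit) (auto simp: n' Transposition.transpose_def)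
    finally show ?thesis .
  qed
  have "card (border_mats p q k n False) = c * card (border_mats p q k n' False)"
    using fiber[of False] card_first_row_fiber_unit[OF r_first] by simp
  moreover have "card (border_mats p q k n' False) > 0" by (rule card_border_mats_False_pos[OF q_pos])
  ultimately show ?thesis
    using fiber[of True] unfolding border_ratio_def n' by simp
qed

lemma real_card_border_mats_Suc_True:
  "real (card (border_mats p q k (Suc n) True)) = real (card (border_mats p q k n False))
    * (card (unit_rows p q n k) * border_ratio p q k n + card (mixed_rows p q n k) * border_ratio p q k (n - 1)
       + card (pmult_rows p q n k) * border_ratio p q (Suc k) n)"
proof -
  let ?c = "real (card (border_mats p q k n False))"
  let ?F = "\<lambda>r. card (first_row_fiber p q k n True r)"
  have "(\<Sum>r\<in>unit_rows p q n k. ?F r) = card (unit_rows p q n k) * card (border_mats p q k n True)"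
    using card_first_row_fiber_unit unfolding unit_rows_def by simp
  moreover have "real (\<Sum>r\<in>mixed_rows p q n k. ?F r)
      = card (mixed_rows p q n k) * (?c * border_ratio p q k (n - 1))"
    using card_mixed_row_fiber by (simp add: of_nat_sum)
  moreover have "(\<Sum>r\<in>pmult_rows p q n k. ?F r) = card (border_mats p q (Suc k) n True)"
    by (rule sum_pmult_rows_first_row_fiber)
  ultimately have "real (card (border_mats p q k (Suc n) True))
      = card (unit_rows p q n k) * real (card (border_mats p q k n True))
        + card (mixed_rows p q n k) * (?c * border_ratio p q k (n - 1))
        + real (card (border_mats p q (Suc k) n True))"
    unfolding card_border_mats_eq_sum_first_row_fibers sum_first_rows_split by simp
  then show ?thesis
    unfolding real_card_border_mats_True[OF q_pos] card_border_mats_Suc_border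
    by (simp add: algebra_simps)
qed

lemma unit_rows_fraction:
  "real (card (unit_rows p q n k)) / real (card (first_rows p q n k)) = 1 - 1/p"
proof -
  let ?Q = "p ^ (\<mu> - 1)"
  have pos: "real q > 0" "real ?Q > 0" using q_pos p_gt_1 by auto
  have "card (unit_rows p q n k) = (q - ?Q) * q ^ n * ?Q ^ k"
    and "card (first_rows p q n k) = q ^ Suc n * ?Q ^ k"
    using p_gt_1 by (simp_all add: card_unit_rows[OF _ q_eq] card_first_rows[OF _ q_eq])
  moreover have "?Q \<le> q" using q_eq p_gt_1 by simp
  ultimately have "real (card (unit_rows p q n k)) / real (card (first_rows p q n k))
      = (real q - real ?Q) * real q ^ n * real ?Q ^ k / (real q ^ Suc n * real ?Q ^ k)"
    by (simp add: of_nat_diff)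
  also have "\<dots> = (real q - real ?Q) * (real q ^ n * real ?Q ^ k) / (real q * (real q ^ n * real ?Q ^ k))"
    by (simp add: ac_simps)
  also have "\<dots> = (real q - real ?Q) / real q" using pos p_gt_1 by simp
  also have "\<dots> = 1 - 1/p" using p_gt_1 by (simp add: q_eq field_simps)
  finally show ?thesis .
qed

lemma pmult_rows_fraction:
  "real (card (pmult_rows p q n k)) / real (card (first_rows p q n k)) = 1 / p ^ Suc n"
proof -
  let ?Q = "p ^ (\<mu> - 1)"
  have pos: "real q > 0" "real ?Q > 0" using q_pos p_gt_1 by auto
  have "real (card (pmult_rows p q n k)) / real (card (first_rows p q n k))
      = real ?Q ^ Suc (n + k) / (real q ^ Suc n * real ?Q ^ k)"
    using p_gt_1 by (simp add: card_pmult_rows[OF _ q_eq] card_first_rows[OF _ q_eq])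
  also have "\<dots> = real ?Q ^ Suc n / real q ^ Suc n" using pos by (simp add: field_simps power_add)
  also have "\<dots> = 1 / p ^ Suc n" using p_gt_1 by (simp add: q_eq field_simps power_mult_distrib)
  finally show ?thesis .
qed

lemma border_ratio_Suc:
  "border_ratio p q k (Suc n) = (1 - 1/p) * border_ratio p q k n
    + (1/p - 1/p ^ Suc n) * border_ratio p q k (n - 1) + 1/p ^ Suc n * border_ratio p q (Suc k) n"
proof -
  let ?R = "real (card (first_rows p q n k))"
  have R: "?R > 0" using card_first_rows[OF _ q_eq] p_gt_1 q_pos by simp
  have c: "real (card (border_mats p q k n False)) > 0" using card_border_mats_False_pos[OF q_pos] by simp
  have "real (card (mixed_rows p q n k))
      = ?R - real (card (unit_rows p q n k)) - real (card (pmult_rows p q n k))"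
    using card_first_rows_split[of p q n k] by simp
  then have "real (card (mixed_rows p q n k)) / ?R
      = 1 - real (card (unit_rows p q n k)) / ?R - real (card (pmult_rows p q n k)) / ?R"
    using R by (simp add: diff_divide_distrib)
  then have mixed: "real (card (mixed_rows p q n k)) / ?R = 1/p - 1/p ^ Suc n"
    unfolding unit_rows_fraction pmult_rows_fraction by simp
  have "border_ratio p q k (Suc n)
      = real (card (unit_rows p q n k)) / ?R * border_ratio p q k n
        + real (card (mixed_rows p q n k)) / ?R * border_ratio p q k (n - 1)
        + real (card (pmult_rows p q n k)) / ?R * border_ratio p q (Suc k) n"
    using R c unfolding border_ratio_def[of p q k "Suc n"] real_card_border_mats_Suc_True
      card_border_mats_Suc_False
    by (simp add: field_simps)
  then show ?thesis unfolding unit_rows_fraction pmult_rows_fraction mixed .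
qed

lemma border_ratio_eq_recsol:
  "border_ratio p q k n = recsol p n (\<lambda>j. border_ratio p q (k + j) 0)"
proof (induction n arbitrary: k rule: less_induct)
  case (less n)
  show ?case
  proof (cases n)
    case (Suc m)
    have "border_ratio p q k m = recsol p m (\<lambda>j. border_ratio p q (k + j) 0)"
      and "border_ratio p q k (m - 1) = recsol p (m - 1) (\<lambda>j. border_ratio p q (k + j) 0)"
      and "border_ratio p q (Suc k) m = recsol p m (\<lambda>j. border_ratio p q (k + Suc j) 0)"
      using less.IH[of m k] less.IH[of "m - 1" k] less.IH[of m "Suc k"] Suc by simp_all
    then show ?thesis unfolding Suc border_ratio_Suc recsol.simps(2) by simp
  qed simp
qed

end

lemma sym_mats_eq_sym_mats_over: "sym_mats n m = sym_mats_over n {1..int m}"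
  unfolding sym_mats_def sym_mats_over_def by auto

lemma det_carrier_mat_0:
  assumes "M \<in> carrier_mat 0 0"
  shows "det M = 1"
proof -
  have "M = 1\<^sub>m 0" using assms by (intro eq_matI) auto
  then show ?thesis by simp
qed

lemma card_nonsing_sym_mats:
  assumes q: "q > 0"
  shows "card (nonsing_sym_mats n q) = card {M \<in> sym_mats_over n {0..<int q}. \<not> int q dvd det M}"
proof -
  have "det (map_mat (\<lambda>x. x mod int q) M) mod int q = det M mod int q" if "M \<in> sym_mats_over n {1..int q}" for M
    using sym_mats_over_carrier[OF that] by (intro det_mod_cong[of _ n]) auto
  then have "int q dvd det M \<longleftrightarrow> int q dvd det (map_mat (\<lambda>x. x mod int q) M)"
    if "M \<in> sym_mats_over n {1..int q}" for M
    using that by (simp add: dvd_eq_mod_eq_0)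
  then have "nonsing_sym_mats n q
      = {M \<in> sym_mats_over n {1..int q}. \<not> int q dvd det (map_mat (\<lambda>x. x mod int q) M)}"
    unfolding nonsing_sym_mats_def sym_mats_eq_sym_mats_over by blast
  then show ?thesis using card_sym_mats_mod[OF q, of n "\<lambda>M. \<not> int q dvd det M"] by simp
qed

definition rep_mod :: "int \<Rightarrow> int \<Rightarrow> int" where
  "rep_mod m x = (if x mod m = 0 then m else x mod m)"

lemma rep_mod_in_range:
  assumes "m > 0"
  shows "rep_mod m x \<in> {1..m}"
proof -
  have "0 \<le> x mod m" "x mod m < m" using assms by simp_all
  then show ?thesis unfolding rep_mod_def by auto
qed

lemma rep_mod_mod: "rep_mod m x mod m = x mod m"
  unfolding rep_mod_def by auto

lemma rep_mod_eq_iff: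
  assumes "e \<in> {1..m}"
  shows "rep_mod m x = e \<longleftrightarrow> x mod m = e mod m"
proof -
  have "x mod m < m" "0 < m" using assms by auto
  then show ?thesis
    using assms unfolding rep_mod_def by (smt (verit) atLeastAtMost_iff mod_pos_pos_trivial mod_self)
qed

lemma card_pmults_rep_mod_fiber:
  assumes p: "p > 0" and q': "q' > 0" and q: "q = p * (c * q')" and e: "e \<in> {1..int q'}"
  shows "card {d \<in> pmults p q. rep_mod (int q') (d div int p) = e} = c"
proof -
  have "{d \<in> pmults p q. rep_mod (int q') (d div int p) = e}
      = (\<lambda>y. int p * y) ` {y \<in> {0..<int c * int q'}. rep_mod (int q') y = e}"
    unfolding pmults_eq_image[OF p q] using p by auto
  also have "{y \<in> {0..<int c * int q'}. rep_mod (int q') y = e}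
      = {y \<in> {0..<int c * int q'}. y mod int q' = e mod int q'}"
    using rep_mod_eq_iff[OF e] by simp
  finally have "{d \<in> pmults p q. rep_mod (int q') (d div int p) = e}
      = (\<lambda>y. int p * y) ` {y \<in> {0..<int c * int q'}. y mod int q' = e mod int q'}" .
  moreover have "inj_on (\<lambda>y. int p * y) A" for A using p by (auto intro: inj_onI)
  ultimately have "card {d \<in> pmults p q. rep_mod (int q') (d div int p) = e}
      = card {y \<in> {0..<int c * int q'}. y mod int q' = e mod int q'}"
    by (simp add: card_image)
  also have "\<dots> = c" using q' by (intro card_residue_class) auto
  finally show ?thesis .
qed

lemma det_pmults_eq:
  assumes M: "M \<in> sym_mats_over j (pmults p q)"
  shows "det M = int p ^ j * det (map_mat (\<lambda>x. x div int p) M)"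
proof -
  have "M = int p \<cdot>\<^sub>m map_mat (\<lambda>x. x div int p) M"
    using M unfolding sym_mats_over_def pmults_def by (intro eq_matI) auto
  then have "det M = det (int p \<cdot>\<^sub>m map_mat (\<lambda>x. x div int p) M)" by simp
  also have "\<dots> = int p ^ j * det (map_mat (\<lambda>x. x div int p) M)"
    using sym_mats_over_carrier[OF M] by simp
  finally show ?thesis .
qed

lemma dvd_det_pmults_iff:
  assumes M: "M \<in> sym_mats_over j (pmults p q)" and p: "p > 0" and q: "q = p ^ j * q'"
  shows "int q dvd det M \<longleftrightarrow> int q' dvd det (map_mat (\<lambda>x. rep_mod (int q') (x div int p)) M)"
proof -
  have M_carrier: "M \<in> carrier_mat j j" using sym_mats_over_carrier[OF M] .
  have "int q dvd det M \<longleftrightarrow> int q' dvd det (map_mat (\<lambda>x. x div int p) M)"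
    unfolding det_pmults_eq[OF M] q using p by (simp add: dvd_times_left_cancel_iff)
  moreover have "det (map_mat (\<lambda>x. x div int p) M) mod int q'
      = det (map_mat (\<lambda>x. rep_mod (int q') (x div int p)) M) mod int q'"
    using M_carrier by (intro det_mod_cong[of _ j]) (auto simp: rep_mod_mod)
  ultimately show ?thesis by (simp add: dvd_eq_mod_eq_0)
qed

context prime_power
begin

lemma border_ratio_no_border: "border_ratio p q 0 n = Pdet n p \<mu>"
proof -
  have "card (border_mats p q 0 n True) = card (nonsing_sym_mats n q)"
    unfolding border_mats_no_border card_nonsing_sym_mats[OF q_pos] by simp
  moreover have "card (border_mats p q 0 n False) = q ^ (n * (n + 1) div 2)"
    unfolding border_mats_no_border by (simp add: card_sym_mats_over)
  moreover have "card (nonsing_sym_mats 0 q) = 1"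
  proof -
    have "q > 1" unfolding q_def using \<mu>_pos p_gt_1 by (intro one_less_power) auto
    then have "\<not> int q dvd 1" using zdvd_imp_le[of "int q" 1] by auto
    then have "{M \<in> sym_mats_over 0 {0..<int q}. \<not> int q dvd det M} = sym_mats_over 0 {0..<int q}"
      by (auto simp: det_carrier_mat_0 dest: sym_mats_over_carrier)
    then show ?thesis unfolding card_nonsing_sym_mats[OF q_pos] by (simp add: card_sym_mats_over)
  qed
  ultimately show ?thesis unfolding border_ratio_def Pdet_def using \<mu>_pos q_def by auto
qed

lemma border_mats_only_border_True_eq_empty:
  assumes "\<mu> \<le> j"
  shows "border_mats p q j 0 True = {}"
proof -
  have "int q dvd det M" if "M \<in> sym_mats_over j (pmults p q)" for M
  proof -
    have "int q dvd int p ^ j" using assms unfolding q_def by (simp add: le_imp_power_dvd)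
    then show ?thesis unfolding det_pmults_eq[OF that] by simp
  qed
  then show ?thesis unfolding border_mats_only_border by auto
qed

lemma border_ratio_only_border_less:
  assumes j: "0 < j" "j < \<mu>"
  defines "q' \<equiv> p ^ (\<mu> - j)"
  shows "border_ratio p q j 0 = real (card (nonsing_sym_mats j q')) / real q' ^ (j * (j + 1) div 2)"
proof -
  define c where "c = p ^ (j - 1)"
  define g where "g x = rep_mod (int q') (x div int p)" for x
  have q'_pos: "q' > 0" unfolding q'_def using p_gt_1 by simp
  have q_split: "q = p ^ j * q'" "q = p * (c * q')"
    unfolding q_def q'_def c_def using j by (simp_all flip: power_add power_Suc)
  have g_range: "g ` pmults p q \<subseteq> {1..int q'}"
    unfolding g_def using q'_pos rep_mod_in_range by auto
  have fiber: "card {d \<in> pmults p q. g d = e} = c" if "e \<in> {1..int q'}" for e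
    unfolding g_def using card_pmults_rep_mod_fiber[OF _ q'_pos q_split(2) that] p_gt_1 by simp
  have finite: "finite (pmults p q)" "finite {1..int q'}" by (simp_all add: finite_pmults)
  have "int q dvd det M \<longleftrightarrow> int q' dvd det (map_mat g M)" if "M \<in> sym_mats_over j (pmults p q)" for M
    unfolding g_def using dvd_det_pmults_iff[OF that _ q_split(1)] p_gt_1 by simp
  then have "border_mats p q j 0 True = {M \<in> sym_mats_over j (pmults p q). \<not> int q' dvd det (map_mat g M)}"
    unfolding border_mats_only_border by auto
  then have "card (border_mats p q j 0 True) = c ^ (j * (j + 1) div 2) * card (nonsing_sym_mats j q')"
    unfolding nonsing_sym_mats_def sym_mats_eq_sym_mats_over
    using card_sym_mats_pullback[OF finite g_range fiber] by simp
  moreover have "card (border_mats p q j 0 False) = c ^ (j * (j + 1) div 2) * q' ^ (j * (j + 1) div 2)"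
    unfolding border_mats_only_border
    using card_sym_mats_pullback[OF finite g_range fiber, of j "\<lambda>_. True"]
    by (simp add: card_sym_mats_over)
  moreover have "c > 0" unfolding c_def using p_gt_1 by simp
  ultimately show ?thesis unfolding border_ratio_def by simp
qed

lemma border_ratio_only_border: "border_ratio p q j 0 = Pdet j p (\<mu> - j)"
proof -
  consider "j = 0" | "0 < j" "j < \<mu>" | "\<mu> \<le> j" by linarith
  then show ?thesis
  proof cases
    case 1
    then show ?thesis using border_ratio_no_border[of 0] by simp
  next
    case 2
    then show ?thesis unfolding border_ratio_only_border_less[OF 2] Pdet_def by simp
  next
    case 3
    then show ?thesis
      unfolding border_ratio_def Pdet_def border_mats_only_border_True_eq_empty[OF 3] by simp
  qed
qed

end

section \<open>Monotonicity of the probabilities\<close>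

lemma Pdet_eq_recsol:
  assumes "prime p" "\<mu> \<ge> 1"
  shows "Pdet n p \<mu> = recsol p n (\<lambda>j. Pdet j p (\<mu> - j))"
proof -
  interpret prime_power p "p ^ \<mu>" \<mu> using assms by unfold_locales auto
  show ?thesis
    using border_ratio_eq_recsol[of 0 n] border_ratio_no_border border_ratio_only_border by simp
qed

lemma Pdet_nonneg: "Pdet n p \<mu> \<ge> 0"
  unfolding Pdet_def by simp

lemma Pdet_boundary_antimono:
  assumes IH: "\<And>m n. m < \<mu> \<Longrightarrow> Pdet (n + 1) p m \<le> Pdet n p m \<and> Pdet n p m \<le> Pdet n p (m + 1)"
  shows "Pdet (Suc j) p (\<mu> - Suc j) \<le> Pdet j p (\<mu> - j)"
proof (cases "j < \<mu>")
  case True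
  then have "\<mu> - Suc j < \<mu>" "\<mu> - j = \<mu> - Suc j + 1" by auto
  then show ?thesis using IH[of "\<mu> - Suc j" j] by simp
next
  case False
  then show ?thesis by (simp add: Pdet_nonneg Pdet_def)
qed

lemma Pdet_boundary_mono:
  assumes IH: "\<And>m n. m < \<mu> \<Longrightarrow> Pdet (n + 1) p m \<le> Pdet n p m \<and> Pdet n p m \<le> Pdet n p (m + 1)"
    and "\<mu> \<ge> 1"
  shows "Pdet j p (\<mu> - j) \<le> Pdet j p (\<mu> + 1 - j)"
proof (cases "j = 0 \<or> \<mu> < j")
  case True
  then show ?thesis using \<open>\<mu> \<ge> 1\<close> by (auto simp: Pdet_nonneg Pdet_def)
next
  case False
  then have "\<mu> - j < \<mu>" "\<mu> + 1 - j = \<mu> - j + 1" by auto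
  then show ?thesis using IH[of "\<mu> - j" j] by simp
qed

lemma Pdet_monotone_step:
  assumes p: "prime p" and \<mu>: "\<mu> \<ge> 1"
    and IH: "\<And>m n. m < \<mu> \<Longrightarrow> Pdet (n + 1) p m \<le> Pdet n p m \<and> Pdet n p m \<le> Pdet n p (m + 1)"
  shows "Pdet (n + 1) p \<mu> \<le> Pdet n p \<mu> \<and> Pdet n p \<mu> \<le> Pdet n p (\<mu> + 1)"
proof -
  have p_ge_1: "real p \<ge> 1" using p prime_ge_1_nat by simp
  have "Pdet (Suc j) p (\<mu> - Suc j) \<le> Pdet j p (\<mu> - j)" for j
    using Pdet_boundary_antimono[of \<mu> p j] IH by blast
  then have "recsol p (Suc n) (\<lambda>j. Pdet j p (\<mu> - j)) \<le> recsol p n (\<lambda>j. Pdet j p (\<mu> - j))"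
    by (rule recsol_Suc_le[OF p_ge_1, of "\<lambda>j. Pdet j p (\<mu> - j)"])
  moreover have "Pdet j p (\<mu> - j) \<le> Pdet j p (\<mu> + 1 - j)" for j
    using Pdet_boundary_mono[of \<mu> p j] IH \<mu> by blast
  then have "recsol p n (\<lambda>j. Pdet j p (\<mu> - j)) \<le> recsol p n (\<lambda>j. Pdet j p (\<mu> + 1 - j))"
    by (rule recsol_mono[OF p_ge_1, of "\<lambda>j. Pdet j p (\<mu> - j)" "\<lambda>j. Pdet j p (\<mu> + 1 - j)"])
  moreover have "Pdet n p (\<mu> + 1) = recsol p n (\<lambda>j. Pdet j p (\<mu> + 1 - j))"
    by (rule Pdet_eq_recsol[OF p]) simp
  ultimately show ?thesis unfolding Pdet_eq_recsol[OF p \<mu>] by simp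
qed

theorem theorem5p3:
  fixes p n \<mu> :: nat
  assumes "prime p"
  shows "Pdet (n + 1) p \<mu> \<le> Pdet n p \<mu> \<and> Pdet n p \<mu> \<le> Pdet n p (\<mu> + 1)"
proof -
  have "\<forall>n. Pdet (n + 1) p \<mu> \<le> Pdet n p \<mu> \<and> Pdet n p \<mu> \<le> Pdet n p (\<mu> + 1)"
  proof (induction \<mu> rule: less_induct)
    case (less \<mu>)
    show ?case
    proof (cases "\<mu> = 0")
      case True
      then show ?thesis by (simp add: Pdet_def)
    next
      case False
      then show ?thesis using Pdet_monotone_step[OF assms, of \<mu>] less.IH by auto
    qed
  qed
  then show ?thesis by blast
qed

end
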